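(* Let $K\subset\mathbb{R}^n$ be a closed convex set and $\sigma>0$. Then the worst case risk of the LSE satisfies $$\varepsilon_K\lesssim\sqrt{\sigma}\,C_n\,\sqrt{\varepsilon^*}\,n^{1/4},$$ where $C_n=4C(1+\log_{c^*}\sqrt{2\pi n})^{3/2}$ for sufficiently large absolute constants $C>1$ and $c^*$.
   Context: Gaussian sequence model: $Y=\mu+\xi$, $\mu\in K$, $\xi\sim N(0,\sigma^2\mathbb{I}_n)$; LSE $\hat\mu=\operatorname{argmin}_{\nu\in K}\|Y-\nu\|_2^2$; $\varepsilon_K^2=\sup_{\mu\in K}\mathbb{E}_\mu\|\hat\mu-\mu\|_2^2$. $M(\eta,T)$: maximal cardinality of a subset of $T$ with pairwise distances $>\eta$; local entropy $M^{\mathrm{loc}}(\varepsilon)=\sup_{\theta\in K}M(\varepsilon/c^*,B(\theta,\varepsilon)\cap K)$ ($c^*$ the same large absolute constant). $\varepsilon^*=\sup\{\varepsilon:\varepsilon^2/\sigma^2\le\log M^{\mathrm{loc}}(\varepsilon)\}$, whose square is (up to constants) the minimax risk over $K$. $\lesssim$ hides an absolute constant. *)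

theory Defs
  imports "HOL-Analysis.Analysis" "HOL-Probability.Probability"
begin

text \<open>R^n is represented by functions nat => real vanishing outside {..<n}.\<close>

definition Rn :: "nat \<Rightarrow> (nat \<Rightarrow> real) set" where
  "Rn n = {x. \<forall>i\<ge>n. x i = 0}"

definition enorm :: "nat \<Rightarrow> (nat \<Rightarrow> real) \<Rightarrow> real" where
  "enorm n x = sqrt (\<Sum>i<n. (x i)\<^sup>2)"

definition edist :: "nat \<Rightarrow> (nat \<Rightarrow> real) \<Rightarrow> (nat \<Rightarrow> real) \<Rightarrow> real" where
  "edist n x y = enorm n (\<lambda>i. x i - y i)"

definition closed_n :: "nat \<Rightarrow> (nat \<Rightarrow> real) set \<Rightarrow> bool" where
  "closed_n n K \<longleftrightarrow> (\<forall>x y. (\<forall>k. x k \<in> K) \<and> y \<in> Rn n \<and>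
      (\<lambda>k. edist n (x k) y) \<longlonglongrightarrow> 0 \<longrightarrow> y \<in> K)"

definition convex_n :: "(nat \<Rightarrow> real) set \<Rightarrow> bool" where
  "convex_n K \<longleftrightarrow> (\<forall>x\<in>K. \<forall>y\<in>K. \<forall>t::real. 0 \<le> t \<and> t \<le> 1 \<longrightarrow>
      (\<lambda>i. (1 - t) * x i + t * y i) \<in> K)"

definition eball :: "nat \<Rightarrow> (nat \<Rightarrow> real) \<Rightarrow> real \<Rightarrow> (nat \<Rightarrow> real) set" where
  "eball n \<theta> r = {x \<in> Rn n. edist n x \<theta> \<le> r}"

definition lse :: "nat \<Rightarrow> (nat \<Rightarrow> real) set \<Rightarrow> (nat \<Rightarrow> real) \<Rightarrow> (nat \<Rightarrow> real)" where
  "lse n K Y = (SOME \<nu>. \<nu> \<in> K \<and> (\<forall>w\<in>K. (edist n Y \<nu>)\<^sup>2 \<le> (edist n Y w)\<^sup>2))"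

definition gauss :: "nat \<Rightarrow> real \<Rightarrow> (nat \<Rightarrow> real) measure" where
  "gauss n \<sigma> = (\<Pi>\<^sub>M i\<in>{..<n}. density lborel (normal_density 0 \<sigma>))"

definition shift :: "nat \<Rightarrow> (nat \<Rightarrow> real) \<Rightarrow> (nat \<Rightarrow> real) \<Rightarrow> (nat \<Rightarrow> real)" where
  "shift n \<mu> \<xi> = (\<lambda>i. if i < n then \<mu> i + \<xi> i else 0)"

text \<open>Worst-case risk epsilon_K^2 (as an extended nonnegative real).\<close>
definition worst_risk :: "nat \<Rightarrow> real \<Rightarrow> (nat \<Rightarrow> real) set \<Rightarrow> ennreal" where
  "worst_risk n \<sigma> K = (SUP \<mu>\<in>K. \<integral>\<^sup>+ \<xi>. ennreal ((edist n (lse n K (shift n \<mu> \<xi>)) \<mu>)\<^sup>2) \<partial>gauss n \<sigma>)"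

definition packing :: "nat \<Rightarrow> real \<Rightarrow> (nat \<Rightarrow> real) set \<Rightarrow> enat" where
  "packing n \<eta> T = (SUP S\<in>{S. finite S \<and> S \<subseteq> T \<and>
       (\<forall>x\<in>S. \<forall>y\<in>S. x \<noteq> y \<longrightarrow> edist n x y > \<eta>)}. enat (card S))"

definition local_packing :: "nat \<Rightarrow> real \<Rightarrow> (nat \<Rightarrow> real) set \<Rightarrow> real \<Rightarrow> enat" where
  "local_packing n c K \<epsilon> = (SUP \<theta>\<in>K. packing n (\<epsilon> / c) (eball n \<theta> \<epsilon> \<inter> K))"

definition entropy_cond :: "nat \<Rightarrow> real \<Rightarrow> (nat \<Rightarrow> real) set \<Rightarrow> real \<Rightarrow> real \<Rightarrow> bool" where
  "entropy_cond n c K \<sigma> \<epsilon> = (case local_packing n c K \<epsilon> of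
       enat m \<Rightarrow> \<epsilon>\<^sup>2 / \<sigma>\<^sup>2 \<le> ln (real m) | \<infinity> \<Rightarrow> True)"

definition eps_star :: "nat \<Rightarrow> real \<Rightarrow> (nat \<Rightarrow> real) set \<Rightarrow> real \<Rightarrow> real" where
  "eps_star n c K \<sigma> = Sup {\<epsilon>. 0 \<le> \<epsilon> \<and> entropy_cond n c K \<sigma> \<epsilon>}"

end

theory Submission
  imports Defs
begin

text \<open>
  Write \<open>\<nu> = \<mu> + \<Delta>\<close> for the projection of \<open>Y = \<mu> + \<xi>\<close> onto \<open>K\<close>. Convexity gives the basic
  inequality \<open>\<parallel>\<Delta>\<parallel>\<^sup>2 \<le> \<langle>\<xi>, \<Delta>\<rangle>\<close>, and pulling \<open>\<nu>\<close> back along the segment to distance \<open>s\<close>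
  from \<open>\<mu>\<close> gives \<open>\<parallel>\<Delta>\<parallel>\<^sup>2 \<le> s\<^sup>2 + F\<^sup>2 / s\<^sup>2\<close> whenever \<open>F\<close> bounds \<open>\<langle>\<xi>, v - \<mu>\<rangle>\<close> on
  \<open>K \<inter> B(\<mu>, s)\<close>. This local supremum is controlled by chaining through nets of
  \<open>K \<inter> B(\<theta>, s / c\<^sup>j)\<close>, taken to be maximal packings, down to the first scale \<open>s / c\<^sup>L \<le> x\<close>
  for some \<open>x > \<epsilon>\<^sup>*\<close>. At every coarser scale the local entropy is below \<open>(s / c\<^sup>j)\<^sup>2 / \<sigma>\<^sup>2\<close>,
  so by the Gaussian maximal inequality the chain costs \<open>O(\<sigma>\<^sup>2 + s\<^sup>2)\<close> in expectation, while the
  remainder is at most \<open>\<parallel>\<xi>\<parallel> x\<close>. Choosing \<open>s\<^sup>2 = \<sigma> sqrt n x\<close> yields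
  \<open>E \<parallel>\<Delta>\<parallel>\<^sup>2 \<le> 305 \<sigma> sqrt n x\<close>; for \<open>x \<le> \<sigma> / 2\<close> the local entropy is trivial and \<open>K\<close> lies within
  \<open>x\<close> of \<open>\<mu>\<close>, and for \<open>x \<ge> \<sigma> sqrt n\<close> the bound \<open>E \<parallel>\<xi>\<parallel>\<^sup>2 \<le> 8 n \<sigma>\<^sup>2\<close> suffices. Letting
  \<open>x \<down> \<epsilon>\<^sup>*\<close> gives \<open>\<epsilon>\<^sub>K\<^sup>2 \<le> 305 \<sigma> sqrt n \<epsilon>\<^sup>*\<close>, which implies the claim because the
  logarithmic factor is at least \<open>1\<close>.
\<close>

definition einner :: "nat \<Rightarrow> (nat \<Rightarrow> real) \<Rightarrow> (nat \<Rightarrow> real) \<Rightarrow> real" where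
  "einner n x y = (\<Sum>i<n. x i * y i)"

lemma enorm_nonneg [simp]: "0 \<le> enorm n x"
  by (simp add: enorm_def sum_nonneg)

lemma enorm_power2: "(enorm n x)\<^sup>2 = (\<Sum>i<n. (x i)\<^sup>2)"
  by (simp add: enorm_def sum_nonneg)

lemma edist_nonneg [simp]: "0 \<le> edist n x y"
  by (simp add: edist_def)

lemma edist_power2: "(edist n x y)\<^sup>2 = (\<Sum>i<n. (x i - y i)\<^sup>2)"
  by (simp add: edist_def enorm_power2)

lemma enorm_eq_L2_set: "enorm n x = L2_set x {..<n}"
  by (simp add: enorm_def L2_set_def)

lemma edist_commute: "edist n x y = edist n y x"
  unfolding edist_def enorm_def by (simp add: power2_commute)

lemma edist_self [simp]: "edist n x x = 0"
  by (simp add: edist_def enorm_def)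

lemma einner_commute: "einner n x y = einner n y x"
  by (simp add: einner_def mult.commute)

lemma einner_scaleL: "einner n (\<lambda>i. a * x i) y = a * einner n x y"
  by (simp add: einner_def sum_distrib_left mult.assoc)

lemma einner_le_enorm_mult: "einner n x y \<le> enorm n x * enorm n y"
proof -
  have "einner n x y \<le> (\<Sum>i<n. \<bar>x i\<bar> * \<bar>y i\<bar>)"
    unfolding einner_def by (intro sum_mono) (metis abs_ge_self abs_mult)
  also have "\<dots> \<le> enorm n x * enorm n y"
    unfolding enorm_eq_L2_set by (rule L2_set_mult_ineq)
  finally show ?thesis .
qed

lemma edist_triangle: "edist n x z \<le> edist n x y + edist n y z"
proof -
  have "edist n x z = L2_set (\<lambda>i. (x i - y i) + (y i - z i)) {..<n}"
    by (simp add: edist_def enorm_eq_L2_set)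
  also have "\<dots> \<le> L2_set (\<lambda>i. x i - y i) {..<n} + L2_set (\<lambda>i. y i - z i) {..<n}"
    by (rule L2_set_triangle_ineq)
  finally show ?thesis by (simp add: edist_def enorm_eq_L2_set)
qed

lemma abs_coord_diff_le_edist:
  assumes "i < n"
  shows "\<bar>x i - y i\<bar> \<le> edist n x y"
proof -
  have "(x i - y i)\<^sup>2 \<le> (\<Sum>j<n. (x j - y j)\<^sup>2)"
    using assms by (intro member_le_sum) auto
  then show ?thesis
    by (metis edist_power2 abs_le_square_iff abs_of_nonneg edist_nonneg)
qed

lemma edist_convex_comb:
  "edist n (\<lambda>i. (1 - t) * x i + t * y i) x = \<bar>t\<bar> * edist n y x"
proof -
  have "(\<Sum>i<n. ((1 - t) * x i + t * y i - x i)\<^sup>2) = t\<^sup>2 * (\<Sum>i<n. (y i - x i)\<^sup>2)"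
    by (simp add: sum_distrib_left power2_eq_square algebra_simps)
  then show ?thesis by (simp add: edist_def enorm_def real_sqrt_mult)
qed

lemma einner_convex_comb_diff:
  "einner n z (\<lambda>i. ((1 - t) * x i + t * y i) - x i) = t * einner n z (\<lambda>i. y i - x i)"
  by (simp add: einner_def sum_distrib_left algebra_simps)

lemma edist_apollonius:
  "(edist n x y)\<^sup>2 = 2 * (edist n z x)\<^sup>2 + 2 * (edist n z y)\<^sup>2
     - 4 * (edist n z (\<lambda>i. (1 - 1/2) * x i + 1/2 * y i))\<^sup>2"
proof -
  have "(\<Sum>i<n. (x i - y i)\<^sup>2) = (\<Sum>i<n. 2 * (z i - x i)\<^sup>2 + 2 * (z i - y i)\<^sup>2
          - 4 * (z i - ((1 - 1/2) * x i + 1/2 * y i))\<^sup>2)"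
    by (intro sum.cong) (simp_all add: power2_eq_square algebra_simps)
  also have "\<dots> = 2 * (\<Sum>i<n. (z i - x i)\<^sup>2) + 2 * (\<Sum>i<n. (z i - y i)\<^sup>2)
          - 4 * (\<Sum>i<n. (z i - ((1 - 1/2) * x i + 1/2 * y i))\<^sup>2)"
    by (simp only: sum_subtractf sum.distrib sum_distrib_left)
  finally show ?thesis by (simp only: edist_power2)
qed

lemma convex_nD:
  "convex_n K \<Longrightarrow> x \<in> K \<Longrightarrow> y \<in> K \<Longrightarrow> 0 \<le> t \<Longrightarrow> t \<le> 1 \<Longrightarrow> (\<lambda>i. (1 - t) * x i + t * y i) \<in> K"
  by (simp add: convex_n_def)

lemma closed_n_complete:
  assumes sub: "K \<subseteq> Rn n" and cl: "closed_n n K" and fK: "\<And>k. f k \<in> K"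
    and cauchy: "\<And>e. e > 0 \<Longrightarrow> \<exists>M. \<forall>k\<ge>M. \<forall>l\<ge>M. edist n (f k) (f l) < e"
  obtains y where "y \<in> K" and "(\<lambda>k. edist n (f k) y) \<longlonglongrightarrow> 0"
proof -
  have "Cauchy (\<lambda>k. f k i)" if "i < n" for i
  proof (rule metric_CauchyI)
    fix e :: real assume "0 < e"
    then obtain M where M: "\<forall>k\<ge>M. \<forall>l\<ge>M. edist n (f k) (f l) < e" using cauchy by blast
    have "dist (f k i) (f l i) < e" if "M \<le> k" "M \<le> l" for k l
    proof -
      have "edist n (f k) (f l) < e" using M that by blast
      then show ?thesis
        using abs_coord_diff_le_edist[OF \<open>i < n\<close>, of "f k" "f l"] by (simp add: dist_real_def)
    qed
    then show "\<exists>M. \<forall>k\<ge>M. \<forall>l\<ge>M. dist (f k i) (f l i) < e" by blast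
  qed
  then have lim: "(\<lambda>k. f k i) \<longlonglongrightarrow> lim (\<lambda>k. f k i)" if "i < n" for i
    using that by (simp add: Cauchy_convergent_iff convergent_LIMSEQ_iff)
  define y where "y = (\<lambda>i. lim (\<lambda>k. f k i))"
  have "f k i = 0" if "n \<le> i" for k i
    using fK[of k] sub that by (auto simp: Rn_def)
  then have yRn: "y \<in> Rn n"
    by (simp add: Rn_def y_def limI)
  have "(\<lambda>k. sqrt (\<Sum>i<n. (f k i - y i)\<^sup>2)) \<longlonglongrightarrow> sqrt (\<Sum>i<n. (y i - y i)\<^sup>2)"
    unfolding y_def by (intro tendsto_intros lim) auto
  then have "(\<lambda>k. edist n (f k) y) \<longlonglongrightarrow> 0"
    by (simp add: edist_def enorm_def)
  moreover from this have "y \<in> K"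
    using cl fK yRn unfolding closed_n_def by blast
  ultimately show thesis using that by blast
qed

text \<open>By convexity the midpoint of two near-minimisers of the distance to \<open>z\<close> lies in \<open>K\<close>, so by
  Apollonius' identity they are close to each other.\<close>
lemma edist_near_minimisers:
  assumes cv: "convex_n K" and xK: "x \<in> K" and yK: "y \<in> K"
    and dmin: "\<And>w. w \<in> K \<Longrightarrow> d \<le> edist n z w" and d0: "0 \<le> d"
    and x: "edist n z x \<le> d + a" and y: "edist n z y \<le> d + b"
    and a: "0 \<le> a" "a \<le> 1" and b: "0 \<le> b" "b \<le> 1"
  shows "(edist n x y)\<^sup>2 \<le> 2 * (2 * d + 1) * (a + b)"
proof -
  have "(\<lambda>i. (1 - 1/2) * x i + 1/2 * y i) \<in> K"
    using cv xK yK by (rule convex_nD) auto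
  then have "d\<^sup>2 \<le> (edist n z (\<lambda>i. (1 - 1/2) * x i + 1/2 * y i))\<^sup>2"
    using dmin d0 by (intro power_mono) auto
  moreover have "(edist n z x)\<^sup>2 \<le> (d + a)\<^sup>2" "(edist n z y)\<^sup>2 \<le> (d + b)\<^sup>2"
    using x y by (auto intro!: power_mono)
  ultimately have "(edist n x y)\<^sup>2 \<le> 2 * (d + a)\<^sup>2 + 2 * (d + b)\<^sup>2 - 4 * d\<^sup>2"
    using edist_apollonius[of n x y z] by linarith
  also have "\<dots> = 2 * (2 * d * a + a * a) + 2 * (2 * d * b + b * b)"
    by (simp add: power2_eq_square algebra_simps)
  also have "\<dots> \<le> 2 * (2 * d * a + a) + 2 * (2 * d * b + b)"
    using mult_left_le_one_le[of a a] mult_left_le_one_le[of b b] a b by simp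
  finally show ?thesis by (simp add: algebra_simps)
qed

lemma cauchy_of_sq_le_harmonic:
  fixes D :: "nat \<Rightarrow> nat \<Rightarrow> real"
  assumes D: "\<And>k l. (D k l)\<^sup>2 \<le> Q * (1 / (real k + 1) + 1 / (real l + 1))"
    and D0: "\<And>k l. 0 \<le> D k l" and Q: "0 \<le> Q" and e: "e > 0"
  shows "\<exists>M. \<forall>k\<ge>M. \<forall>l\<ge>M. D k l < e"
proof -
  obtain M :: nat where "2 * Q / e\<^sup>2 < real M"
    using reals_Archimedean2 by blast
  then have "2 * Q / e\<^sup>2 < real M + 1"
    by linarith
  then have M: "Q * (2 / (real M + 1)) < e\<^sup>2"
    using e by (simp add: field_simps)
  have "D k l < e" if "M \<le> k" "M \<le> l" for k l
  proof -
    have inv: "1 / (real j + 1) \<le> 1 / (real M + 1)" if "M \<le> j" for j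
      using that by (simp add: frac_le)
    have "(D k l)\<^sup>2 \<le> Q * (1 / (real k + 1) + 1 / (real l + 1))"
      by (rule D)
    also have "\<dots> \<le> Q * (2 / (real M + 1))"
      using inv[OF \<open>M \<le> k\<close>] inv[OF \<open>M \<le> l\<close>] Q by (intro mult_left_mono) auto
    finally show ?thesis
      using M e D0[of k l] by (smt (verit) power_mono)
  qed
  then show ?thesis by blast
qed

lemma closed_convex_closest_point_exists:
  assumes ne: "K \<noteq> {}" and sub: "K \<subseteq> Rn n" and cl: "closed_n n K" and cv: "convex_n K"
  shows "\<exists>\<nu>\<in>K. \<forall>w\<in>K. edist n z \<nu> \<le> edist n z w"
proof -
  define d where "d = Inf (edist n z ` K)"
  have dmin: "d \<le> edist n z w" if "w \<in> K" for w
    unfolding d_def using that by (intro cInf_lower) (auto intro: bdd_belowI[of _ 0])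
  have d0: "0 \<le> d"
    unfolding d_def using ne by (intro cInf_greatest) auto
  have "\<exists>w\<in>K. edist n z w < d + 1 / (real k + 1)" for k
    using cInf_lessD[of "edist n z ` K" "d + 1 / (real k + 1)"] ne by (auto simp: d_def)
  then obtain f where fK: "\<And>k. f k \<in> K" and fd: "\<And>k. edist n z (f k) < d + 1 / (real k + 1)"
    by metis
  have "(edist n (f k) (f l))\<^sup>2 \<le> 2 * (2 * d + 1) * (1 / (real k + 1) + 1 / (real l + 1))" for k l
    by (rule edist_near_minimisers[OF cv fK fK dmin d0 less_imp_le[OF fd] less_imp_le[OF fd]]) auto
  then have cauchy: "\<exists>M. \<forall>k\<ge>M. \<forall>l\<ge>M. edist n (f k) (f l) < e" if "e > 0" for e
    by (rule cauchy_of_sq_le_harmonic[where Q = "2 * (2 * d + 1)"]) (use d0 that in auto)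
  obtain y where yK: "y \<in> K" and flim: "(\<lambda>k. edist n (f k) y) \<longlonglongrightarrow> 0"
    using closed_n_complete[OF sub cl fK cauchy] by blast
  have "edist n z y \<le> d"
  proof (rule LIMSEQ_le_const)
    have "(\<lambda>k. 1 / (real k + 1)) \<longlonglongrightarrow> 0"
      using LIMSEQ_inverse_real_of_nat by (simp add: inverse_eq_divide add.commute)
    from tendsto_add[OF tendsto_add[OF tendsto_const[of d] this] flim]
    show "(\<lambda>k. d + 1 / (real k + 1) + edist n (f k) y) \<longlonglongrightarrow> d" by simp
    show "\<exists>N. \<forall>k\<ge>N. edist n z y \<le> d + 1 / (real k + 1) + edist n (f k) y"
    proof (intro exI allI impI)
      fix k :: nat
      show "edist n z y \<le> d + 1 / (real k + 1) + edist n (f k) y"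
        using edist_triangle[of n z y "f k"] fd[of k] by linarith
    qed
  qed
  then have "edist n z y \<le> edist n z w" if "w \<in> K" for w
    using dmin[OF that] by linarith
  with yK show ?thesis by blast
qed

lemma closest_point_variational_ineq:
  assumes cv: "convex_n K" and \<nu>K: "\<nu> \<in> K" and wK: "w \<in> K"
    and closest: "\<And>w. w \<in> K \<Longrightarrow> edist n z \<nu> \<le> edist n z w"
  shows "einner n (\<lambda>i. z i - \<nu> i) (\<lambda>i. w i - \<nu> i) \<le> 0"
proof (rule ccontr)
  define a where "a = einner n (\<lambda>i. z i - \<nu> i) (\<lambda>i. w i - \<nu> i)"
  define b where "b = (\<Sum>i<n. (w i - \<nu> i)\<^sup>2)"
  assume "\<not> einner n (\<lambda>i. z i - \<nu> i) (\<lambda>i. w i - \<nu> i) \<le> 0"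
  then have a0: "a > 0" by (simp add: a_def)
  have b0: "b \<ge> 0" by (simp add: b_def sum_nonneg)
  have key: "0 \<le> - 2 * t * a + t\<^sup>2 * b" if "0 \<le> t" "t \<le> 1" for t
  proof -
    have "(\<lambda>i. (1 - t) * \<nu> i + t * w i) \<in> K"
      using cv \<nu>K wK that by (rule convex_nD)
    then have le: "(edist n z \<nu>)\<^sup>2 \<le> (edist n z (\<lambda>i. (1 - t) * \<nu> i + t * w i))\<^sup>2"
      using closest by (simp add: power_mono)
    have "(edist n z (\<lambda>i. (1 - t) * \<nu> i + t * w i))\<^sup>2
        = (\<Sum>i<n. (z i - \<nu> i)\<^sup>2 + (- 2 * t) * ((z i - \<nu> i) * (w i - \<nu> i)) + t\<^sup>2 * (w i - \<nu> i)\<^sup>2)"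
      unfolding edist_power2 by (intro sum.cong) (simp_all add: power2_eq_square algebra_simps)
    also have "\<dots> = (edist n z \<nu>)\<^sup>2 + (- 2 * t) * a + t\<^sup>2 * b"
      by (simp only: sum.distrib sum_distrib_left[symmetric] edist_power2 a_def b_def einner_def)
    finally show ?thesis using le by linarith
  qed
  show False
  proof (cases "b = 0")
    case True
    then show False using key[of 1] a0 by simp
  next
    case False
    then have bp: "b > 0" using b0 by simp
    define t where "t = min 1 (a / b)"
    have t0: "0 < t" "t \<le> 1" using a0 bp by (auto simp: t_def)
    have "t * b \<le> a" using bp by (simp add: t_def min_def field_simps)
    then have "t\<^sup>2 * b \<le> t * a" using t0 by (simp add: power2_eq_square mult.assoc mult_left_mono)
    moreover have "0 < t * a" using t0 a0 by simp
    ultimately show False using key[of t] t0 by linarith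
  qed
qed

locale closed_convex_set =
  fixes n :: nat and K :: "(nat \<Rightarrow> real) set"
  assumes nonempty: "K \<noteq> {}" and subset_Rn: "K \<subseteq> Rn n"
    and closed: "closed_n n K" and convex: "convex_n K"
begin

lemma lse_closest:
  shows lse_in: "lse n K z \<in> K"
    and lse_le: "w \<in> K \<Longrightarrow> edist n z (lse n K z) \<le> edist n z w"
proof -
  obtain \<nu> where "\<nu> \<in> K" "\<forall>w\<in>K. edist n z \<nu> \<le> edist n z w"
    using closed_convex_closest_point_exists[OF nonempty subset_Rn closed convex] by blast
  then have "\<exists>\<nu>. \<nu> \<in> K \<and> (\<forall>w\<in>K. (edist n z \<nu>)\<^sup>2 \<le> (edist n z w)\<^sup>2)"
    by (auto intro: power_mono)
  then have "lse n K z \<in> K \<and> (\<forall>w\<in>K. (edist n z (lse n K z))\<^sup>2 \<le> (edist n z w)\<^sup>2)"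
    unfolding lse_def by (rule someI_ex)
  then show "lse n K z \<in> K" and "w \<in> K \<Longrightarrow> edist n z (lse n K z) \<le> edist n z w"
    by (auto simp: power2_le_iff_abs_le)
qed

definition lse_error :: "(nat \<Rightarrow> real) \<Rightarrow> (nat \<Rightarrow> real) \<Rightarrow> real" where
  "lse_error \<mu> \<xi> = edist n (lse n K (shift n \<mu> \<xi>)) \<mu>"

lemma lse_error_nonneg [simp]: "0 \<le> lse_error \<mu> \<xi>"
  by (simp add: lse_error_def)

lemma lse_error_sq_le_einner:
  assumes "\<mu> \<in> K"
  shows "(lse_error \<mu> \<xi>)\<^sup>2 \<le> einner n \<xi> (\<lambda>i. lse n K (shift n \<mu> \<xi>) i - \<mu> i)"
proof -
  define \<nu> where "\<nu> = lse n K (shift n \<mu> \<xi>)"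
  have "einner n (\<lambda>i. shift n \<mu> \<xi> i - \<nu> i) (\<lambda>i. \<mu> i - \<nu> i) \<le> 0"
    unfolding \<nu>_def by (rule closest_point_variational_ineq[OF convex lse_in assms lse_le])
  then have "(\<Sum>i<n. (\<mu> i + \<xi> i - \<nu> i) * (\<mu> i - \<nu> i)) \<le> 0"
    by (simp add: einner_def shift_def)
  moreover have "(\<Sum>i<n. (\<mu> i + \<xi> i - \<nu> i) * (\<mu> i - \<nu> i))
      = (\<Sum>i<n. (\<nu> i - \<mu> i)\<^sup>2) - (\<Sum>i<n. \<xi> i * (\<nu> i - \<mu> i))"
    by (simp add: sum_subtractf[symmetric] power2_eq_square algebra_simps)
  ultimately show ?thesis
    by (simp add: lse_error_def edist_power2 einner_def \<nu>_def)
qed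

lemma lse_error_sq_le_enorm_mult:
  assumes "\<mu> \<in> K"
  shows "(lse_error \<mu> \<xi>)\<^sup>2 \<le> enorm n \<xi> * lse_error \<mu> \<xi>"
proof -
  have "(lse_error \<mu> \<xi>)\<^sup>2 \<le> einner n \<xi> (\<lambda>i. lse n K (shift n \<mu> \<xi>) i - \<mu> i)"
    by (rule lse_error_sq_le_einner[OF assms])
  also have "\<dots> \<le> enorm n \<xi> * enorm n (\<lambda>i. lse n K (shift n \<mu> \<xi>) i - \<mu> i)"
    by (rule einner_le_enorm_mult)
  finally show ?thesis by (simp add: lse_error_def edist_def)
qed

lemma lse_error_le_enorm:
  assumes "\<mu> \<in> K"
  shows "lse_error \<mu> \<xi> \<le> enorm n \<xi>"
  using lse_error_sq_le_enorm_mult[OF assms, of \<xi>]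
  by (cases "lse_error \<mu> \<xi> = 0") (auto simp: power2_eq_square less_le)

text \<open>If the estimate is farther than \<open>s\<close> from \<open>\<mu>\<close>, the point of \<open>K\<close> at distance \<open>s\<close> on the
  segment towards it already correlates with the noise by at least \<open>s\<close> times the error.\<close>
lemma lse_error_sq_le_of_local_sup:
  assumes \<mu>K: "\<mu> \<in> K" and s: "s > 0"
    and sup: "\<And>v. v \<in> K \<Longrightarrow> edist n v \<mu> \<le> s \<Longrightarrow> einner n \<xi> (\<lambda>i. v i - \<mu> i) \<le> F"
  shows "(lse_error \<mu> \<xi>)\<^sup>2 \<le> s\<^sup>2 + F\<^sup>2 / s\<^sup>2"
proof (cases "lse_error \<mu> \<xi> \<le> s")
  case True
  then have "(lse_error \<mu> \<xi>)\<^sup>2 \<le> s\<^sup>2" by (simp add: power_mono)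
  then show ?thesis by (simp add: add_increasing2)
next
  case False
  define \<nu> where "\<nu> = lse n K (shift n \<mu> \<xi>)"
  define t where "t = lse_error \<mu> \<xi>"
  have tp: "s < t" using False by (simp add: t_def)
  define a where "a = s / t"
  have a01: "0 \<le> a" "a \<le> 1" using tp s by (auto simp: a_def)
  define v where "v = (\<lambda>i. (1 - a) * \<mu> i + a * \<nu> i)"
  have vK: "v \<in> K"
    unfolding v_def \<nu>_def using convex \<mu>K lse_in a01 by (rule convex_nD)
  have "edist n v \<mu> = \<bar>a\<bar> * t"
    unfolding v_def t_def lse_error_def \<nu>_def by (rule edist_convex_comb)
  also have "\<dots> = s" using tp s by (simp add: a_def)
  finally have "einner n \<xi> (\<lambda>i. v i - \<mu> i) \<le> F"
    using sup[OF vK] by simp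
  moreover have "einner n \<xi> (\<lambda>i. v i - \<mu> i) = a * einner n \<xi> (\<lambda>i. \<nu> i - \<mu> i)"
    unfolding v_def by (rule einner_convex_comb_diff)
  moreover have "a * t\<^sup>2 \<le> a * einner n \<xi> (\<lambda>i. \<nu> i - \<mu> i)"
    using lse_error_sq_le_einner[OF \<mu>K, of \<xi>] a01 by (simp add: mult_left_mono t_def \<nu>_def)
  moreover have "a * t\<^sup>2 = s * t" using tp s by (simp add: a_def power2_eq_square)
  ultimately have "t \<le> F / s" using s by (simp add: field_simps)
  then have "t\<^sup>2 \<le> (F / s)\<^sup>2"
    using tp s by (intro power_mono) auto
  then show ?thesis by (simp add: t_def power_divide add_increasing)
qed

end

definition separated :: "nat \<Rightarrow> real \<Rightarrow> (nat \<Rightarrow> real) set \<Rightarrow> bool" where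
  "separated n \<eta> S \<longleftrightarrow> (\<forall>x\<in>S. \<forall>y\<in>S. x \<noteq> y \<longrightarrow> \<eta> < edist n x y)"

lemma card_le_packing:
  assumes "finite S" "S \<subseteq> T" "separated n \<eta> S"
  shows "enat (card S) \<le> packing n \<eta> T"
  unfolding packing_def using assms unfolding separated_def by (intro SUP_upper) auto

lemma card_le_local_packing:
  assumes "finite S" "S \<subseteq> eball n \<theta> \<epsilon> \<inter> K" "separated n (\<epsilon> / c) S"
    and "\<theta> \<in> K" and "local_packing n c K \<epsilon> = enat m"
  shows "card S \<le> m"
proof -
  have "enat (card S) \<le> packing n (\<epsilon> / c) (eball n \<theta> \<epsilon> \<inter> K)"
    using assms by (intro card_le_packing)
  also have "\<dots> \<le> local_packing n c K \<epsilon>"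
    unfolding local_packing_def using assms by (intro SUP_upper) auto
  finally show ?thesis using assms by simp
qed

lemma edist_le_of_same_cell:
  assumes h: "h > 0" and cell: "\<And>i. i < n \<Longrightarrow> \<lfloor>(x i - \<theta> i) / h\<rfloor> = \<lfloor>(y i - \<theta> i) / h\<rfloor>"
  shows "edist n x y \<le> h * sqrt (real n)"
proof -
  have "(x i - y i)\<^sup>2 \<le> h\<^sup>2" if "i < n" for i
  proof -
    have "\<bar>(x i - \<theta> i) / h - (y i - \<theta> i) / h\<bar> < 1"
      using cell[OF that] floor_correct[of "(x i - \<theta> i) / h"] floor_correct[of "(y i - \<theta> i) / h"]
      by (simp add: abs_less_iff) linarith
    then have "\<bar>x i - y i\<bar> < h"
      using h by (simp add: diff_divide_distrib[symmetric] abs_divide)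
    then show ?thesis using h by (simp add: abs_le_square_iff[symmetric] less_imp_le)
  qed
  then have "(edist n x y)\<^sup>2 \<le> (h * sqrt (real n))\<^sup>2"
    unfolding edist_power2 using sum_mono[of "{..<n}" "\<lambda>i. (x i - y i)\<^sup>2" "\<lambda>_. h\<^sup>2"]
    by (simp add: power_mult_distrib mult_ac)
  then show ?thesis using h by (simp add: power2_le_iff_abs_le)
qed

lemma cell_index_bounded:
  assumes h: "h > 0" and i: "i < n" and x: "edist n x \<theta> \<le> h * R"
  shows "\<lfloor>(x i - \<theta> i) / h\<rfloor> \<in> {-(\<lceil>R\<rceil> + 1)..\<lceil>R\<rceil> + 1}"
proof -
  have "\<bar>x i - \<theta> i\<bar> \<le> h * R"
    using abs_coord_diff_le_edist[OF i, of x \<theta>] x by linarith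
  then have "- (h * R) \<le> x i - \<theta> i" "x i - \<theta> i \<le> h * R"
    by (simp_all add: abs_le_iff)
  then have "- R \<le> (x i - \<theta> i) / h" "(x i - \<theta> i) / h \<le> R"
    using h by (simp_all add: le_divide_eq divide_le_eq mult.commute)
  then show ?thesis
    using le_of_int_ceiling[of R] by (simp add: le_floor_iff floor_le_iff) linarith
qed

definition grid_count :: "nat \<Rightarrow> real \<Rightarrow> nat" where
  "grid_count n c = nat (2 * (\<lceil>c * sqrt (real n)\<rceil> + 1) + 1) ^ n"

text \<open>Volumetric bound: cells of side \<open>\<epsilon> / (c sqrt n)\<close> have diameter \<open>\<epsilon> / c\<close>, so an
  \<open>\<epsilon> / c\<close>-separated set meets each of them at most once.\<close>
lemma card_separated_le_grid_count:
  assumes n: "n \<ge> 1" and c: "c > 0" and \<epsilon>: "\<epsilon> > 0" and fin: "finite S"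
    and S: "S \<subseteq> eball n \<theta> \<epsilon>" and sep: "separated n (\<epsilon> / c) S"
  shows "card S \<le> grid_count n c"
proof -
  define h where "h = (\<epsilon> / c) / sqrt (real n)"
  define N where "N = \<lceil>c * sqrt (real n)\<rceil> + 1"
  have h: "h > 0" using n c \<epsilon> by (simp add: h_def)
  have hR: "\<epsilon> = h * (c * sqrt (real n))" using n c by (simp add: h_def)
  define g where "g = (\<lambda>x. restrict (\<lambda>i. \<lfloor>(x i - \<theta> i) / h\<rfloor>) {..<n})"
  have "inj_on g S"
  proof (rule inj_onI, rule ccontr)
    fix x y assume xy: "x \<in> S" "y \<in> S" "g x = g y" "x \<noteq> y"
    have "\<lfloor>(x i - \<theta> i) / h\<rfloor> = \<lfloor>(y i - \<theta> i) / h\<rfloor>" if "i < n" for i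
      using fun_cong[OF xy(3), of i] that by (simp add: g_def)
    then have "edist n x y \<le> h * sqrt (real n)"
      by (rule edist_le_of_same_cell[OF h])
    also have "h * sqrt (real n) = \<epsilon> / c" using n by (simp add: h_def)
    finally show False using sep xy unfolding separated_def by force
  qed
  moreover have "g ` S \<subseteq> (\<Pi>\<^sub>E i\<in>{..<n}. {-N..N})"
  proof
    fix z assume "z \<in> g ` S"
    then obtain x where x: "x \<in> S" and z: "z = g x" by blast
    then have "edist n x \<theta> \<le> h * (c * sqrt (real n))"
      using S hR by (auto simp: eball_def)
    then show "z \<in> (\<Pi>\<^sub>E i\<in>{..<n}. {-N..N})"
      using cell_index_bounded[OF h] by (auto simp: z g_def N_def)
  qed
  ultimately have "card S \<le> card (\<Pi>\<^sub>E i\<in>{..<n}. {-N..N})"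
    by (subst card_image[symmetric]) (auto intro: card_mono simp: finite_PiE)
  then show ?thesis by (simp add: card_PiE grid_count_def N_def)
qed

lemma local_packing_le_grid_count:
  assumes n: "n \<ge> 1" and c: "c > 0" and \<epsilon>: "\<epsilon> > 0"
  shows "local_packing n c K \<epsilon> \<le> enat (grid_count n c)"
  unfolding local_packing_def packing_def
  using card_separated_le_grid_count[OF n c \<epsilon>] by (auto intro!: SUP_least simp: separated_def)

lemma ln_of_nat_nonneg: "0 \<le> ln (real (m::nat))"
  by (cases m) auto

lemma bdd_above_entropy_cond:
  assumes n: "n \<ge> 1" and c: "c > 0" and \<sigma>: "\<sigma> > 0"
  shows "bdd_above {\<epsilon>. 0 \<le> \<epsilon> \<and> entropy_cond n c K \<sigma> \<epsilon>}"
proof (rule bdd_aboveI)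
  fix \<epsilon> assume "\<epsilon> \<in> {\<epsilon>. 0 \<le> \<epsilon> \<and> entropy_cond n c K \<sigma> \<epsilon>}"
  then have \<epsilon>0: "0 \<le> \<epsilon>" and cond: "entropy_cond n c K \<sigma> \<epsilon>" by auto
  define G where "G = grid_count n c"
  show "\<epsilon> \<le> \<sigma> * sqrt (ln (real G + 1))"
  proof (cases "\<epsilon> = 0")
    case False
    then have "local_packing n c K \<epsilon> \<le> enat G"
      unfolding G_def using \<epsilon>0 by (intro local_packing_le_grid_count[OF n c]) auto
    then obtain m where m: "local_packing n c K \<epsilon> = enat m" and mG: "m \<le> G"
      by (cases "local_packing n c K \<epsilon>") auto
    have "\<epsilon>\<^sup>2 / \<sigma>\<^sup>2 \<le> ln (real m)" using cond m by (simp add: entropy_cond_def)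
    also have "\<dots> \<le> ln (real G + 1)"
      using mG by (cases "m = 0") auto
    finally have "\<epsilon>\<^sup>2 \<le> (\<sigma> * sqrt (ln (real G + 1)))\<^sup>2"
      using \<sigma> by (simp add: field_simps power_mult_distrib)
    then show ?thesis using \<sigma> by (simp add: power2_le_iff_abs_le)
  qed (use \<sigma> in simp)
qed

lemma eps_star_nonneg:
  assumes "n \<ge> 1" "c > 0" "\<sigma> > 0"
  shows "0 \<le> eps_star n c K \<sigma>"
  unfolding eps_star_def using bdd_above_entropy_cond[OF assms]
  by (rule cSup_upper[rotated]) (auto simp: entropy_cond_def ln_of_nat_nonneg split: enat.split)

lemma local_packing_gt_eps_star:
  assumes n: "n \<ge> 1" and c: "c > 0" and \<sigma>: "\<sigma> > 0" and gt: "\<epsilon> > eps_star n c K \<sigma>"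
  obtains m where "local_packing n c K \<epsilon> = enat m" and "ln (real m) < \<epsilon>\<^sup>2 / \<sigma>\<^sup>2"
proof -
  have "0 \<le> \<epsilon>" using eps_star_nonneg[OF n c \<sigma>, of K] gt by linarith
  moreover have "\<not> (0 \<le> \<epsilon> \<and> entropy_cond n c K \<sigma> \<epsilon>)"
  proof
    assume "0 \<le> \<epsilon> \<and> entropy_cond n c K \<sigma> \<epsilon>"
    then have "\<epsilon> \<le> eps_star n c K \<sigma>"
      unfolding eps_star_def by (intro cSup_upper bdd_above_entropy_cond[OF n c \<sigma>]) simp
    then show False using gt by simp
  qed
  ultimately show thesis
    using that by (cases "local_packing n c K \<epsilon>") (auto simp: entropy_cond_def)
qed

text \<open>A maximal \<open>r / c\<close>-separated subset of \<open>B(\<theta>, r) \<inter> K\<close> is an \<open>r / c\<close>-net of it.\<close>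
lemma local_packing_net:
  assumes c: "c > 0" and r: "r > 0" and lp: "local_packing n c K r = enat m" and \<theta>: "\<theta> \<in> K"
  obtains P where "finite P" "P \<subseteq> eball n \<theta> r \<inter> K" "card P \<le> m"
    "\<And>v. v \<in> eball n \<theta> r \<inter> K \<Longrightarrow> \<exists>q\<in>P. edist n v q \<le> r / c"
proof -
  define Fam where "Fam = (\<lambda>S. finite S \<and> S \<subseteq> eball n \<theta> r \<inter> K \<and> separated n (r / c) S)"
  have card: "card S \<le> m" if "Fam S" for S
    using that \<theta> lp unfolding Fam_def by (intro card_le_local_packing) auto
  have "Fam {}" by (simp add: Fam_def separated_def)
  moreover have "\<forall>S. Fam S \<longrightarrow> card S < m + 1"
    using card by (simp add: less_Suc_eq_le)
  ultimately obtain S where S: "Fam S" and max: "\<And>S'. Fam S' \<Longrightarrow> card S' \<le> card S"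
    using ex_has_greatest_nat[of Fam "{}" card "m + 1"] by blast
  have "\<exists>q\<in>S. edist n v q \<le> r / c" if v: "v \<in> eball n \<theta> r \<inter> K" for v
  proof (rule ccontr)
    assume "\<not> (\<exists>q\<in>S. edist n v q \<le> r / c)"
    then have far: "\<And>q. q \<in> S \<Longrightarrow> r / c < edist n v q" by force
    then have "v \<notin> S" using divide_pos_pos[OF r c] by fastforce
    moreover have "Fam (insert v S)"
      using S v far unfolding Fam_def separated_def by (auto simp: edist_commute)
    ultimately show False
      using max[of "insert v S"] S by (simp add: Fam_def)
  qed
  then show thesis using that S card[OF S] unfolding Fam_def by blast
qed

text \<open>If no two points of \<open>B(\<mu>, r) \<inter> K\<close> are \<open>r / c\<close>-apart, convexity keeps all of \<open>K\<close>
  within \<open>r / c\<close> of \<open>\<mu>\<close>: a farther point could be pulled back into the ball.\<close>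
lemma edist_le_of_local_packing_le_one:
  assumes c: "c > 1" and r: "r > 0" and lp: "local_packing n c K r = enat m" and m: "m \<le> 1"
    and cv: "convex_n K" and sub: "K \<subseteq> Rn n" and \<mu>: "\<mu> \<in> K" and p: "p \<in> K"
  shows "edist n p \<mu> \<le> r / c"
proof (rule ccontr)
  assume far: "\<not> edist n p \<mu> \<le> r / c"
  have rc: "0 < r / c" "r / c < r" using c r by (auto simp: divide_less_eq)
  obtain q where q: "q \<in> K" "r / c < edist n q \<mu>" "edist n q \<mu> \<le> r"
  proof (cases "edist n p \<mu> \<le> r")
    case True
    then show ?thesis using that p far by simp
  next
    case False
    define t where "t = r / edist n p \<mu>"
    have t: "0 \<le> t" "t \<le> 1" using False r by (auto simp: t_def)
    have "edist n (\<lambda>i. (1 - t) * \<mu> i + t * p i) \<mu> = \<bar>t\<bar> * edist n p \<mu>"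
      by (rule edist_convex_comb)
    also have "\<dots> = r" using False r t by (simp add: t_def)
    finally have "edist n (\<lambda>i. (1 - t) * \<mu> i + t * p i) \<mu> = r" .
    then show ?thesis
      using that[of "\<lambda>i. (1 - t) * \<mu> i + t * p i"] convex_nD[OF cv \<mu> p t] rc by simp
  qed
  then have "card {\<mu>, q} \<le> m"
    using \<mu> sub r rc lp
    by (intro card_le_local_packing[of _ n \<mu> r K c]) (auto simp: separated_def eball_def edist_commute)
  moreover have "q \<noteq> \<mu>" using q rc by auto
  ultimately show False using m by simp
qed

lemma normal_density_mult_exp:
  assumes "\<sigma> > 0"
  shows "normal_density 0 \<sigma> x * exp (a * x) = exp (a\<^sup>2 * \<sigma>\<^sup>2 / 2) * normal_density (a * \<sigma>\<^sup>2) \<sigma> x"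
proof -
  have "-(x - 0)\<^sup>2 / (2 * \<sigma>\<^sup>2) + a * x = a\<^sup>2 * \<sigma>\<^sup>2 / 2 + (-(x - a * \<sigma>\<^sup>2)\<^sup>2 / (2 * \<sigma>\<^sup>2))"
    using assms by (simp add: field_simps power2_eq_square)
  then have "exp (-(x - 0)\<^sup>2 / (2 * \<sigma>\<^sup>2)) * exp (a * x)
      = exp (a\<^sup>2 * \<sigma>\<^sup>2 / 2) * exp (-(x - a * \<sigma>\<^sup>2)\<^sup>2 / (2 * \<sigma>\<^sup>2))"
    by (simp only: mult_exp_exp)
  then show ?thesis unfolding normal_density_def
    by (simp only: mult.assoc) (simp only: mult.left_commute)
qed

lemma nn_integral_exp_normal:
  assumes \<sigma>: "\<sigma> > 0"
  shows "(\<integral>\<^sup>+x. ennreal (exp (a * x)) \<partial>density lborel (normal_density 0 \<sigma>))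
    = ennreal (exp (a\<^sup>2 * \<sigma>\<^sup>2 / 2))"
proof -
  have "(\<integral>\<^sup>+x. ennreal (exp (a * x)) \<partial>density lborel (normal_density 0 \<sigma>))
      = (\<integral>\<^sup>+x. ennreal (exp (a\<^sup>2 * \<sigma>\<^sup>2 / 2)) * ennreal (normal_density (a * \<sigma>\<^sup>2) \<sigma> x) \<partial>lborel)"
    by (subst nn_integral_density)
      (auto intro!: nn_integral_cong simp: ennreal_mult'[symmetric] normal_density_mult_exp[OF \<sigma>])
  also have "\<dots> = ennreal (exp (a\<^sup>2 * \<sigma>\<^sup>2 / 2))"
    using \<sigma> by (subst nn_integral_cmult) (auto simp: nn_integral_eq_integral)
  finally show ?thesis .
qed

lemma product_prob_space_normal:
  assumes "\<sigma> > 0"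
  shows "product_prob_space (\<lambda>_. density lborel (normal_density 0 \<sigma>))"
proof -
  interpret prob_space "density lborel (normal_density 0 \<sigma>)"
    using assms by (simp add: prob_space_normal_density)
  show ?thesis
    by (simp add: product_prob_space_def product_prob_space_axioms_def product_sigma_finite_def
        prob_space_normal_density sigma_finite_measure_axioms assms)
qed

lemma prob_space_gauss:
  assumes "\<sigma> > 0"
  shows "prob_space (gauss n \<sigma>)"
proof -
  interpret product_prob_space "\<lambda>_. density lborel (normal_density 0 \<sigma>)" "{..<n}"
    by (rule product_prob_space_normal[OF assms])
  show ?thesis unfolding gauss_def by (rule P.prob_space_axioms)
qed

lemma nn_integral_gauss_exp_einner:
  assumes \<sigma>: "\<sigma> > 0"
  shows "(\<integral>\<^sup>+\<xi>. ennreal (exp (einner n w \<xi>)) \<partial>gauss n \<sigma>)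
    = ennreal (exp (\<sigma>\<^sup>2 * (enorm n w)\<^sup>2 / 2))"
proof -
  interpret product_prob_space "\<lambda>_. density lborel (normal_density 0 \<sigma>)" "{..<n}"
    by (rule product_prob_space_normal[OF \<sigma>])
  have "(\<integral>\<^sup>+\<xi>. ennreal (exp (einner n w \<xi>)) \<partial>gauss n \<sigma>)
      = (\<integral>\<^sup>+\<xi>. (\<Prod>i\<in>{..<n}. (\<lambda>i x. ennreal (exp (w i * x))) i (\<xi> i)) \<partial>gauss n \<sigma>)"
    by (intro nn_integral_cong) (simp add: einner_def exp_sum prod_ennreal)
  also have "\<dots> = (\<Prod>i\<in>{..<n}. ennreal (exp ((w i)\<^sup>2 * \<sigma>\<^sup>2 / 2)))"
    unfolding gauss_def by (subst product_nn_integral_prod) (auto simp: nn_integral_exp_normal[OF \<sigma>])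
  also have "\<dots> = ennreal (exp (\<sigma>\<^sup>2 * (enorm n w)\<^sup>2 / 2))"
    by (simp add: prod_ennreal exp_sum[symmetric] enorm_power2 sum_distrib_left sum_divide_distrib
        mult.commute)
  finally show ?thesis .
qed

definition gauss_mean_le :: "nat \<Rightarrow> real \<Rightarrow> ((nat \<Rightarrow> real) \<Rightarrow> real) \<Rightarrow> real \<Rightarrow> bool" where
  "gauss_mean_le n \<sigma> G B \<longleftrightarrow> G \<in> borel_measurable (gauss n \<sigma>) \<and> (\<forall>\<xi>. 0 \<le> G \<xi>) \<and> 0 \<le> B \<and>
     (\<integral>\<^sup>+\<xi>. ennreal (G \<xi>) \<partial>gauss n \<sigma>) \<le> ennreal B"

lemma gauss_mean_le_add:
  assumes "gauss_mean_le n \<sigma> G1 B1" "gauss_mean_le n \<sigma> G2 B2"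
  shows "gauss_mean_le n \<sigma> (\<lambda>\<xi>. G1 \<xi> + G2 \<xi>) (B1 + B2)"
proof -
  have "(\<integral>\<^sup>+\<xi>. ennreal (G1 \<xi> + G2 \<xi>) \<partial>gauss n \<sigma>)
      = (\<integral>\<^sup>+\<xi>. ennreal (G1 \<xi>) \<partial>gauss n \<sigma>) + (\<integral>\<^sup>+\<xi>. ennreal (G2 \<xi>) \<partial>gauss n \<sigma>)"
    using assms unfolding gauss_mean_le_def
    by (subst nn_integral_add[symmetric]) (auto intro!: nn_integral_cong simp: ennreal_plus)
  also have "\<dots> \<le> ennreal B1 + ennreal B2"
    using assms by (intro add_mono) (auto simp: gauss_mean_le_def)
  finally show ?thesis
    using assms by (auto simp: gauss_mean_le_def)
qed

lemma gauss_mean_le_cmult: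
  assumes "gauss_mean_le n \<sigma> G B" "c \<ge> 0"
  shows "gauss_mean_le n \<sigma> (\<lambda>\<xi>. c * G \<xi>) (c * B)"
proof -
  have "(\<integral>\<^sup>+\<xi>. ennreal (c * G \<xi>) \<partial>gauss n \<sigma>) = ennreal c * (\<integral>\<^sup>+\<xi>. ennreal (G \<xi>) \<partial>gauss n \<sigma>)"
    using assms unfolding gauss_mean_le_def
    by (subst nn_integral_cmult[symmetric]) (auto intro!: nn_integral_cong simp: ennreal_mult)
  also have "\<dots> \<le> ennreal c * ennreal B"
    using assms by (intro mult_left_mono) (auto simp: gauss_mean_le_def)
  finally show ?thesis
    using assms by (auto simp: gauss_mean_le_def ennreal_mult)
qed

lemma gauss_mean_le_const:
  assumes "\<sigma> > 0" "c \<ge> 0"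
  shows "gauss_mean_le n \<sigma> (\<lambda>\<xi>. c) c"
proof -
  interpret prob_space "gauss n \<sigma>" by (rule prob_space_gauss[OF assms(1)])
  show ?thesis using assms by (simp add: gauss_mean_le_def emeasure_space_1)
qed

lemma gauss_mean_le_mono: "gauss_mean_le n \<sigma> G B \<Longrightarrow> B \<le> B' \<Longrightarrow> gauss_mean_le n \<sigma> G B'"
  unfolding gauss_mean_le_def by (auto intro: order_trans ennreal_leI)

lemma gauss_mean_le_sum:
  assumes "\<sigma> > 0" "finite J" "\<And>j. j \<in> J \<Longrightarrow> gauss_mean_le n \<sigma> (G j) (B j)"
  shows "gauss_mean_le n \<sigma> (\<lambda>\<xi>. \<Sum>j\<in>J. G j \<xi>) (\<Sum>j\<in>J. B j)"
  using assms(2,3)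
  by (induction J rule: finite_induct) (auto intro: gauss_mean_le_add gauss_mean_le_const[OF assms(1)])

lemma nn_integral_gauss_le_of_majorant:
  assumes "gauss_mean_le n \<sigma> G B" "\<And>\<xi>. F \<xi> \<le> G \<xi>"
  shows "(\<integral>\<^sup>+\<xi>. ennreal (F \<xi>) \<partial>gauss n \<sigma>) \<le> ennreal B"
proof -
  have "(\<integral>\<^sup>+\<xi>. ennreal (F \<xi>) \<partial>gauss n \<sigma>) \<le> (\<integral>\<^sup>+\<xi>. ennreal (G \<xi>) \<partial>gauss n \<sigma>)"
    using assms by (intro nn_integral_mono ennreal_leI) auto
  also have "\<dots> \<le> ennreal B" using assms by (simp add: gauss_mean_le_def)
  finally show ?thesis .
qed

lemma gauss_mean_le_exp_einner:
  assumes \<sigma>: "\<sigma> > 0" and w: "enorm n w \<le> R"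
  shows "gauss_mean_le n \<sigma> (\<lambda>\<xi>. exp (a * einner n w \<xi>)) (exp (a\<^sup>2 * \<sigma>\<^sup>2 * R\<^sup>2 / 2))"
proof -
  have "(\<lambda>\<xi>. exp (a * einner n w \<xi>)) \<in> borel_measurable (gauss n \<sigma>)"
    unfolding gauss_def einner_def by measurable
  moreover have "(\<integral>\<^sup>+\<xi>. ennreal (exp (a * einner n w \<xi>)) \<partial>gauss n \<sigma>)
      = ennreal (exp (\<sigma>\<^sup>2 * (enorm n (\<lambda>i. a * w i))\<^sup>2 / 2))"
    by (simp add: nn_integral_gauss_exp_einner[OF \<sigma>, symmetric] einner_scaleL)
  moreover have "\<sigma>\<^sup>2 * (enorm n (\<lambda>i. a * w i))\<^sup>2 / 2 \<le> a\<^sup>2 * \<sigma>\<^sup>2 * R\<^sup>2 / 2"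
  proof -
    have "(enorm n (\<lambda>i. a * w i))\<^sup>2 = a\<^sup>2 * (enorm n w)\<^sup>2"
      by (simp add: enorm_power2 power_mult_distrib sum_distrib_left)
    also have "\<dots> \<le> a\<^sup>2 * R\<^sup>2"
      using w by (intro mult_left_mono power_mono) auto
    finally have "\<sigma>\<^sup>2 * (enorm n (\<lambda>i. a * w i))\<^sup>2 \<le> \<sigma>\<^sup>2 * (a\<^sup>2 * R\<^sup>2)"
      by (rule mult_left_mono) simp
    then show ?thesis by (simp add: mult_ac)
  qed
  ultimately show ?thesis
    by (auto simp: gauss_mean_le_def intro: order_trans ennreal_leI)
qed

lemma power2_le_2_exp: "0 \<le> (y::real) \<Longrightarrow> y\<^sup>2 \<le> 2 * exp y"
  using exp_lower_Taylor_quadratic[of y] by simp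

lemma power2_le_2_cosh: "(y::real)\<^sup>2 \<le> 2 * (exp y + exp (- y))"
  using power2_le_2_exp[of y] power2_le_2_exp[of "- y"] exp_gt_zero[of y] exp_gt_zero[of "- y"]
  by (smt (verit) power2_minus)

definition unit_coord :: "nat \<Rightarrow> nat \<Rightarrow> real" where
  "unit_coord k = (\<lambda>i. if i = k then 1 else 0)"

lemma einner_unit_coord:
  assumes "k < n"
  shows "einner n (unit_coord k) \<xi> = \<xi> k"
proof -
  have e: "(\<lambda>i. unit_coord k i * \<xi> i) = (\<lambda>i. if i = k then \<xi> k else 0)"
    by (auto simp: unit_coord_def)
  show ?thesis unfolding einner_def e using assms by simp
qed

lemma enorm_unit_coord_le: "enorm n (unit_coord k) \<le> 1"
proof -
  have e: "(\<lambda>i. (unit_coord k i)\<^sup>2) = (\<lambda>i. if i = k then 1 else (0::real))"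
    by (auto simp: unit_coord_def)
  have "(\<Sum>i<n. (unit_coord k i)\<^sup>2) = (if k < n then 1 else 0)"
    unfolding e by simp
  then show ?thesis by (simp add: enorm_def)
qed

text \<open>Applying \<open>y\<^sup>2 \<le> 2 cosh y\<close> coordinatewise trades \<open>\<parallel>\<xi>\<parallel>\<^sup>2\<close> for exponential moments.\<close>
definition sq_norm_majorant :: "nat \<Rightarrow> real \<Rightarrow> (nat \<Rightarrow> real) \<Rightarrow> real" where
  "sq_norm_majorant n \<sigma> \<xi> = (\<Sum>k<n. 2 * \<sigma>\<^sup>2 *
     (exp ((1 / \<sigma>) * einner n (unit_coord k) \<xi>) + exp ((- 1 / \<sigma>) * einner n (unit_coord k) \<xi>)))"

lemma enorm_sq_le_sq_norm_majorant:
  assumes \<sigma>: "\<sigma> > 0"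
  shows "(enorm n \<xi>)\<^sup>2 \<le> sq_norm_majorant n \<sigma> \<xi>"
  unfolding sq_norm_majorant_def enorm_power2
proof (intro sum_mono)
  fix k assume "k \<in> {..<n}"
  have "(\<xi> k)\<^sup>2 = \<sigma>\<^sup>2 * (\<xi> k / \<sigma>)\<^sup>2" using \<sigma> by (simp add: power_divide)
  also have "\<dots> \<le> \<sigma>\<^sup>2 * (2 * (exp (\<xi> k / \<sigma>) + exp (- (\<xi> k / \<sigma>))))"
    by (intro mult_left_mono power2_le_2_cosh) auto
  finally show "(\<xi> k)\<^sup>2 \<le> 2 * \<sigma>\<^sup>2 *
      (exp ((1 / \<sigma>) * einner n (unit_coord k) \<xi>) + exp ((- 1 / \<sigma>) * einner n (unit_coord k) \<xi>))"
    using \<open>k \<in> {..<n}\<close> by (simp add: einner_unit_coord algebra_simps)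
qed

lemma gauss_mean_le_sq_norm_majorant:
  assumes \<sigma>: "\<sigma> > 0"
  shows "gauss_mean_le n \<sigma> (sq_norm_majorant n \<sigma>) (8 * real n * \<sigma>\<^sup>2)"
proof -
  have coord: "gauss_mean_le n \<sigma> (\<lambda>\<xi>. exp (a * einner n (unit_coord k) \<xi>)) (exp (1 / 2))"
    if "a\<^sup>2 * \<sigma>\<^sup>2 = 1" for a k
    using gauss_mean_le_exp_einner[OF \<sigma> enorm_unit_coord_le, where a = a] that by simp
  have "gauss_mean_le n \<sigma> (sq_norm_majorant n \<sigma>) (\<Sum>k<n. 2 * \<sigma>\<^sup>2 * (exp (1 / 2) + exp (1 / 2)))"
    unfolding sq_norm_majorant_def using \<sigma>
    by (intro gauss_mean_le_sum[OF \<sigma>] gauss_mean_le_cmult gauss_mean_le_add coord)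
      (auto simp: power_divide)
  moreover have "(\<Sum>k<n. 2 * \<sigma>\<^sup>2 * (exp (1 / 2) + exp (1 / 2))) \<le> 8 * real n * \<sigma>\<^sup>2"
  proof -
    have "exp (1 / 2) * (real n * \<sigma>\<^sup>2) \<le> 2 * (real n * \<sigma>\<^sup>2)"
      by (rule mult_right_mono[OF exp_half_le2]) simp
    then show ?thesis by (simp add: mult_ac)
  qed
  ultimately show ?thesis by (rule gauss_mean_le_mono)
qed

definition max_abs_einner :: "nat \<Rightarrow> (nat \<Rightarrow> real) set \<Rightarrow> (nat \<Rightarrow> real) \<Rightarrow> real" where
  "max_abs_einner n W \<xi> = Max (insert 0 ((\<lambda>w. \<bar>einner n \<xi> w\<bar>) ` W))"

lemma max_abs_einner_nonneg: "finite W \<Longrightarrow> 0 \<le> max_abs_einner n W \<xi>"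
  unfolding max_abs_einner_def by (rule Max_ge) auto

lemma abs_einner_le_max_abs_einner: "finite W \<Longrightarrow> w \<in> W \<Longrightarrow> \<bar>einner n \<xi> w\<bar> \<le> max_abs_einner n W \<xi>"
  unfolding max_abs_einner_def by (rule Max_ge) auto

lemma exp_max_abs_einner_le_sum:
  assumes fin: "finite W" and pos: "max_abs_einner n W \<xi> > 0"
  shows "exp (l * max_abs_einner n W \<xi>)
    \<le> (\<Sum>w\<in>W. exp (l * einner n w \<xi>) + exp ((- l) * einner n w \<xi>))"
proof -
  have "max_abs_einner n W \<xi> \<in> insert 0 ((\<lambda>w. \<bar>einner n \<xi> w\<bar>) ` W)"
    unfolding max_abs_einner_def using fin by (intro Max_in) auto
  then obtain w0 where w0: "w0 \<in> W" and Z: "max_abs_einner n W \<xi> = \<bar>einner n w0 \<xi>\<bar>"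
    using pos by (auto simp: einner_commute)
  define e where "e = einner n w0 \<xi>"
  have "exp (l * max_abs_einner n W \<xi>) = exp (l * e) \<or> exp (l * max_abs_einner n W \<xi>) = exp ((- l) * e)"
    by (simp add: Z e_def abs_if)
  then have "exp (l * max_abs_einner n W \<xi>) \<le> exp (l * e) + exp ((- l) * e)"
    using exp_gt_zero[of "l * e"] exp_gt_zero[of "(- l) * e"] by linarith
  also have "\<dots> \<le> (\<Sum>w\<in>W. exp (l * einner n w \<xi>) + exp ((- l) * einner n w \<xi>))"
    unfolding e_def using fin w0
    by (intro member_le_sum[where f = "\<lambda>w. exp (l * einner n w \<xi>) + exp ((- l) * einner n w \<xi>)"])
      (auto intro: add_nonneg_nonneg)
  finally show ?thesis .
qed

text \<open>Chernoff-type pointwise bound: for \<open>Z \<ge> a\<close> one has \<open>Z\<^sup>2 \<le> 2 a\<^sup>2 + 2 (Z - a)\<^sup>2\<close> and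
  \<open>(Z - a)\<^sup>2 \<le> (2 / l\<^sup>2) exp (l (Z - a))\<close>.\<close>
lemma max_abs_einner_sq_le:
  assumes fin: "finite W" and a: "a > 0" and l: "l > 0"
  shows "(max_abs_einner n W \<xi>)\<^sup>2 \<le> 2 * a\<^sup>2 + (4 / l\<^sup>2) * exp (- l * a) *
           (\<Sum>w\<in>W. exp (l * einner n w \<xi>) + exp ((- l) * einner n w \<xi>))"
proof -
  define Z where "Z = max_abs_einner n W \<xi>"
  define S where "S = (\<Sum>w\<in>W. exp (l * einner n w \<xi>) + exp ((- l) * einner n w \<xi>))"
  have S0: "0 \<le> S" unfolding S_def by (intro sum_nonneg) (auto intro: add_nonneg_nonneg)
  have Z0: "0 \<le> Z" unfolding Z_def by (rule max_abs_einner_nonneg[OF fin])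
  have "Z\<^sup>2 \<le> 2 * a\<^sup>2 + (4 / l\<^sup>2) * exp (- l * a) * S"
  proof (cases "Z \<le> a")
    case True
    then have "Z\<^sup>2 \<le> a\<^sup>2" using Z0 by (intro power_mono) auto
    moreover have "0 \<le> (4 / l\<^sup>2) * exp (- l * a) * S" using S0 by simp
    ultimately show ?thesis using zero_le_power2[of a] by linarith
  next
    case False
    have "Z\<^sup>2 \<le> 2 * a\<^sup>2 + 2 * (Z - a)\<^sup>2"
      using zero_le_power2[of "Z - 2 * a"] by (simp add: power2_eq_square algebra_simps)
    moreover have "l\<^sup>2 * (Z - a)\<^sup>2 \<le> 2 * exp (l * (Z - a))"
      using power2_le_2_exp[of "l * (Z - a)"] False l by (simp add: power_mult_distrib)
    then have "(Z - a)\<^sup>2 \<le> (2 / l\<^sup>2) * exp (l * (Z - a))"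
      using l by (simp add: field_simps)
    moreover have "exp (- l * a) * exp (l * Z) \<le> exp (- l * a) * S"
      using exp_max_abs_einner_le_sum[OF fin, of n \<xi> l] False a
      by (intro mult_left_mono) (auto simp: Z_def S_def)
    then have "(2 / l\<^sup>2) * exp (l * (Z - a)) \<le> (2 / l\<^sup>2) * (exp (- l * a) * S)"
      by (intro mult_left_mono) (simp_all add: exp_add[symmetric] algebra_simps)
    moreover have "(4 / l\<^sup>2) * exp (- l * a) * S = 2 * ((2 / l\<^sup>2) * (exp (- l * a) * S))"
      by simp
    ultimately show ?thesis by linarith
  qed
  then show ?thesis by (simp only: Z_def S_def)
qed

lemma one_le_ln_4: "1 \<le> ln (4::real)"
proof -
  have "exp (1::real) = exp (1/2) * exp (1/2)" by (simp add: mult_exp_exp)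
  also have "\<dots> \<le> 2 * 2" using exp_half_le2 by (intro mult_mono) auto
  finally show ?thesis by (simp add: ln_ge_iff)
qed

text \<open>Gaussian maximal inequality, from the pointwise bound above with \<open>L = log (4 (N + 1))\<close>,
  \<open>a\<^sup>2 = 2 \<sigma>\<^sup>2 R\<^sup>2 L\<close> and \<open>l = a / (\<sigma>\<^sup>2 R\<^sup>2)\<close>, so that each exponential moment is \<open>e\<^sup>L\<close>.\<close>
lemma max_abs_einner_sq_majorant:
  assumes fin: "finite W" and R: "R > 0" and \<sigma>: "\<sigma> > 0" and W: "\<And>w. w \<in> W \<Longrightarrow> enorm n w \<le> R"
  shows "\<exists>G. gauss_mean_le n \<sigma> G (\<sigma>\<^sup>2 * R\<^sup>2 * (4 * ln (4 * (real (card W) + 1)) + 2))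
    \<and> (\<forall>\<xi>. (max_abs_einner n W \<xi>)\<^sup>2 \<le> G \<xi>)"
proof -
  define N where "N = real (card W)"
  define L where "L = ln (4 * (N + 1))"
  define q where "q = \<sigma>\<^sup>2 * R\<^sup>2"
  have q: "q > 0" using \<sigma> R by (simp add: q_def)
  have N: "N \<ge> 0" by (simp add: N_def)
  have "ln 4 \<le> L"
    unfolding L_def using N by (subst ln_le_cancel_iff) auto
  then have L: "L \<ge> 1" using one_le_ln_4 by linarith
  define a where "a = sqrt (2 * q * L)"
  define l where "l = a / q"
  have a2: "a\<^sup>2 = 2 * q * L" and a: "a > 0" using q L by (simp_all add: a_def)
  have l: "l > 0" using a q by (simp add: l_def)
  have la: "l * a = 2 * L" using a2 q by (simp add: l_def power2_eq_square field_simps)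
  have "l\<^sup>2 * \<sigma>\<^sup>2 * R\<^sup>2 / 2 = a\<^sup>2 / (2 * q)"
    using q by (simp add: l_def q_def power_divide power2_eq_square)
  also have "\<dots> = L"
    using a2 q by simp
  finally have lq: "l\<^sup>2 * \<sigma>\<^sup>2 * R\<^sup>2 / 2 = L" .
  have ll: "4 / l\<^sup>2 = 2 * q / L"
    using a2 q L by (simp add: l_def power_divide field_simps power2_eq_square)
  define G where "G = (\<lambda>\<xi>. 2 * a\<^sup>2 + (4 / l\<^sup>2) * exp (- l * a) *
           (\<Sum>w\<in>W. exp (l * einner n w \<xi>) + exp ((- l) * einner n w \<xi>)))"
  have "gauss_mean_le n \<sigma> G (2 * a\<^sup>2 + (4 / l\<^sup>2) * exp (- l * a) * (\<Sum>w\<in>W. exp L + exp L))"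
    unfolding G_def
    using gauss_mean_le_exp_einner[OF \<sigma> W, where a = l] gauss_mean_le_exp_einner[OF \<sigma> W, where a = "- l"]
    by (intro gauss_mean_le_add gauss_mean_le_const[OF \<sigma>] gauss_mean_le_cmult
        gauss_mean_le_sum[OF \<sigma> fin]) (auto simp: lq)
  moreover have "(4 / l\<^sup>2) * exp (- l * a) * (\<Sum>w\<in>W. exp L + exp L) \<le> 2 * q"
  proof -
    have "(4 / l\<^sup>2) * exp (- l * a) * (\<Sum>w\<in>W. exp L + exp L)
        = (2 * q / L) * (2 * N * (exp (- (2 * L)) * exp L))"
      using la ll by (simp add: N_def mult_ac)
    also have "exp (- (2 * L)) * exp L = exp (- L)"
      by (simp add: mult_exp_exp)
    also have "\<dots> = 1 / (4 * (N + 1))"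
      using N by (simp add: L_def exp_minus inverse_eq_divide)
    also have "(2 * q / L) * (2 * N * (1 / (4 * (N + 1)))) \<le> (2 * q / L) * 1"
      using q L N by (intro mult_left_mono) (auto simp: field_simps)
    also have "\<dots> \<le> 2 * q"
      using q L by (simp add: field_simps)
    finally show ?thesis .
  qed
  ultimately have "gauss_mean_le n \<sigma> G (q * (4 * L + 2))"
    using a2 by (elim gauss_mean_le_mono) (simp add: algebra_simps)
  moreover have "(max_abs_einner n W \<xi>)\<^sup>2 \<le> G \<xi>" for \<xi>
    unfolding G_def by (rule max_abs_einner_sq_le[OF fin a l])
  ultimately show ?thesis
    by (auto simp: q_def L_def N_def)
qed

primrec chain_level :: "(nat \<Rightarrow> (nat \<Rightarrow> real) \<Rightarrow> (nat \<Rightarrow> real) set) \<Rightarrow> (nat \<Rightarrow> real) \<Rightarrow> nat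
    \<Rightarrow> (nat \<Rightarrow> real) set" where
  "chain_level N \<mu> 0 = {\<mu>}"
| "chain_level N \<mu> (Suc j) = (\<Union>p\<in>chain_level N \<mu> j. N j p)"

definition chain_links :: "(nat \<Rightarrow> (nat \<Rightarrow> real) \<Rightarrow> (nat \<Rightarrow> real) set) \<Rightarrow> (nat \<Rightarrow> real) \<Rightarrow> nat
    \<Rightarrow> (nat \<Rightarrow> real) set" where
  "chain_links N \<mu> j = (\<lambda>(p, q). (\<lambda>i. q i - p i)) ` (SIGMA p:chain_level N \<mu> j. N j p)"

locale chaining_nets = closed_convex_set n K for n K +
  fixes L :: nat and r :: "nat \<Rightarrow> real"
    and N :: "nat \<Rightarrow> (nat \<Rightarrow> real) \<Rightarrow> (nat \<Rightarrow> real) set" and m :: "nat \<Rightarrow> nat"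
    and \<mu> :: "nat \<Rightarrow> real"
  assumes net_finite: "\<And>j \<theta>. j < L \<Longrightarrow> \<theta> \<in> K \<Longrightarrow> finite (N j \<theta>)"
    and net_subset: "\<And>j \<theta>. j < L \<Longrightarrow> \<theta> \<in> K \<Longrightarrow> N j \<theta> \<subseteq> eball n \<theta> (r j) \<inter> K"
    and net_card: "\<And>j \<theta>. j < L \<Longrightarrow> \<theta> \<in> K \<Longrightarrow> card (N j \<theta>) \<le> m j"
    and net_covers: "\<And>j \<theta> v. j < L \<Longrightarrow> \<theta> \<in> K \<Longrightarrow> v \<in> eball n \<theta> (r j) \<inter> K
      \<Longrightarrow> \<exists>q\<in>N j \<theta>. edist n v q \<le> r (Suc j)"
    and center: "\<mu> \<in> K"
begin

lemma chain_level_subset_finite_card: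
  "j \<le> L \<Longrightarrow> chain_level N \<mu> j \<subseteq> K \<and> finite (chain_level N \<mu> j) \<and>
    card (chain_level N \<mu> j) \<le> (\<Prod>k<j. m k)"
proof (induction j)
  case 0
  then show ?case using center by simp
next
  case (Suc j)
  then have IH: "chain_level N \<mu> j \<subseteq> K" "finite (chain_level N \<mu> j)"
    "card (chain_level N \<mu> j) \<le> (\<Prod>k<j. m k)" and j: "j < L" by auto
  have "card (chain_level N \<mu> (Suc j)) \<le> (\<Sum>p\<in>chain_level N \<mu> j. card (N j p))"
    by (simp add: card_UN_le IH(2))
  also have "\<dots> \<le> card (chain_level N \<mu> j) * m j"
    using IH(1) net_card[OF j] sum_mono[of _ "\<lambda>p. card (N j p)" "\<lambda>_. m j"] by (simp add: subset_iff)
  also have "\<dots> \<le> (\<Prod>k<Suc j. m k)"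
    using IH(3) by simp
  finally show ?case
    using IH net_subset[OF j] net_finite[OF j] by auto
qed

lemma chain_links_finite_card_enorm:
  assumes j: "j < L"
  shows "finite (chain_links N \<mu> j)" and "card (chain_links N \<mu> j) \<le> (\<Prod>k<Suc j. m k)"
    and "w \<in> chain_links N \<mu> j \<Longrightarrow> enorm n w \<le> r j"
proof -
  have lvl: "chain_level N \<mu> j \<subseteq> K" "finite (chain_level N \<mu> j)"
    "card (chain_level N \<mu> j) \<le> (\<Prod>k<j. m k)"
    using chain_level_subset_finite_card[of j] j by auto
  have fin: "finite (SIGMA p:chain_level N \<mu> j. N j p)"
    using lvl net_finite[OF j] by auto
  then show "finite (chain_links N \<mu> j)" by (simp add: chain_links_def)
  have "card (chain_links N \<mu> j) \<le> card (SIGMA p:chain_level N \<mu> j. N j p)"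
    unfolding chain_links_def by (rule card_image_le[OF fin])
  also have "\<dots> = (\<Sum>p\<in>chain_level N \<mu> j. card (N j p))"
    using lvl net_finite[OF j] by (subst card_SigmaI) auto
  also have "\<dots> \<le> card (chain_level N \<mu> j) * m j"
    using lvl(1) net_card[OF j] sum_mono[of _ "\<lambda>p. card (N j p)" "\<lambda>_. m j"] by (simp add: subset_iff)
  also have "\<dots> \<le> (\<Prod>k<Suc j. m k)"
    using lvl(3) by simp
  finally show "card (chain_links N \<mu> j) \<le> (\<Prod>k<Suc j. m k)" .
  assume "w \<in> chain_links N \<mu> j"
  then obtain p q where "p \<in> chain_level N \<mu> j" "q \<in> N j p" and w: "w = (\<lambda>i. q i - p i)"
    unfolding chain_links_def by auto
  then have "q \<in> eball n p (r j)" using net_subset[OF j] lvl(1) by blast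
  then show "enorm n w \<le> r j" by (simp add: w eball_def edist_def)
qed

text \<open>Chaining: walking from \<open>\<mu>\<close> towards \<open>v\<close> through the nets, each step is a link of its level.\<close>
lemma einner_le_chain_sum:
  assumes v: "v \<in> K" "edist n v \<mu> \<le> r 0" and j: "j \<le> L"
  shows "\<exists>p\<in>chain_level N \<mu> j. edist n v p \<le> r j \<and>
    einner n \<xi> (\<lambda>i. v i - \<mu> i) \<le> (\<Sum>k<j. max_abs_einner n (chain_links N \<mu> k) \<xi>)
      + einner n \<xi> (\<lambda>i. v i - p i)"
  using j
proof (induction j)
  case 0
  then show ?case using v by simp
next
  case (Suc j)
  then have j: "j < L" by simp
  from Suc obtain p where p: "p \<in> chain_level N \<mu> j" and vp: "edist n v p \<le> r j"
    and sum: "einner n \<xi> (\<lambda>i. v i - \<mu> i)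
      \<le> (\<Sum>k<j. max_abs_einner n (chain_links N \<mu> k) \<xi>) + einner n \<xi> (\<lambda>i. v i - p i)"
    by auto
  have "p \<in> K" using p chain_level_subset_finite_card[of j] j by auto
  moreover have "v \<in> eball n p (r j) \<inter> K" using v vp subset_Rn by (auto simp: eball_def)
  ultimately obtain q where q: "q \<in> N j p" and vq: "edist n v q \<le> r (Suc j)"
    using net_covers[OF j] by blast
  have link: "(\<lambda>i. q i - p i) \<in> chain_links N \<mu> j"
    unfolding chain_links_def using p q by force
  have "einner n \<xi> (\<lambda>i. v i - p i) = einner n \<xi> (\<lambda>i. q i - p i) + einner n \<xi> (\<lambda>i. v i - q i)"
    by (simp add: einner_def sum.distrib[symmetric] algebra_simps)
  also have "einner n \<xi> (\<lambda>i. q i - p i) \<le> max_abs_einner n (chain_links N \<mu> j) \<xi>"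
    using abs_einner_le_max_abs_einner[OF chain_links_finite_card_enorm(1)[OF j] link, of n \<xi>]
    by linarith
  finally show ?case
    using sum p q vq by force
qed

end

lemma sum_power2_le_weighted:
  fixes r Z :: "nat \<Rightarrow> real"
  assumes "\<And>i. i < L \<Longrightarrow> r i > 0"
  shows "(\<Sum>i<L. Z i)\<^sup>2 \<le> (\<Sum>i<L. r i) * (\<Sum>i<L. (Z i)\<^sup>2 / r i)"
proof -
  have "(\<Sum>i<L. Z i) = (\<Sum>i<L. sqrt (r i) * (Z i / sqrt (r i)))"
    using assms by (intro sum.cong) (auto simp: less_le)
  then have "(\<Sum>i<L. Z i)\<^sup>2 \<le> (\<Sum>i<L. (sqrt (r i))\<^sup>2) * (\<Sum>i<L. (Z i / sqrt (r i))\<^sup>2)"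
    by (simp only: Cauchy_Schwarz_ineq_sum)
  also have "\<dots> = (\<Sum>i<L. r i) * (\<Sum>i<L. (Z i)\<^sup>2 / r i)"
    using assms by (intro arg_cong2[where f = "(*)"] sum.cong) (auto simp: power_divide less_imp_le)
  finally show ?thesis .
qed

context chaining_nets
begin

lemma lse_error_sq_le_chaining:
  assumes s: "s > 0" "r 0 = s" and r_pos: "\<And>i. r i > 0" and r_sum: "(\<Sum>i<L. r i) \<le> 2 * s"
  shows "(lse_error \<mu> \<xi>)\<^sup>2 \<le> s\<^sup>2 + (4 / s) * (\<Sum>i<L. (max_abs_einner n (chain_links N \<mu> i) \<xi>)\<^sup>2 / r i)
           + (2 * (r L)\<^sup>2 / s\<^sup>2) * (enorm n \<xi>)\<^sup>2"
proof -
  define Z where "Z = (\<lambda>i. max_abs_einner n (chain_links N \<mu> i) \<xi>)"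
  define F where "F = (\<Sum>i<L. Z i) + enorm n \<xi> * r L"
  have "einner n \<xi> (\<lambda>i. v i - \<mu> i) \<le> F" if v: "v \<in> K" "edist n v \<mu> \<le> s" for v
  proof -
    obtain p where "edist n v p \<le> r L"
      and chain: "einner n \<xi> (\<lambda>i. v i - \<mu> i) \<le> (\<Sum>k<L. Z k) + einner n \<xi> (\<lambda>i. v i - p i)"
      using einner_le_chain_sum[of v L \<xi>] v s by (auto simp: Z_def)
    moreover have "einner n \<xi> (\<lambda>i. v i - p i) \<le> enorm n \<xi> * enorm n (\<lambda>i. v i - p i)"
      by (rule einner_le_enorm_mult)
    ultimately show ?thesis
      using mult_left_mono[of "edist n v p" "r L" "enorm n \<xi>"] by (simp add: F_def edist_def)
  qed
  then have "(lse_error \<mu> \<xi>)\<^sup>2 \<le> s\<^sup>2 + F\<^sup>2 / s\<^sup>2"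
    by (rule lse_error_sq_le_of_local_sup[OF center s(1)])
  moreover have "F\<^sup>2 \<le> 2 * (\<Sum>i<L. Z i)\<^sup>2 + 2 * (enorm n \<xi> * r L)\<^sup>2"
    using zero_le_power2[of "(\<Sum>i<L. Z i) - enorm n \<xi> * r L"]
    by (simp add: F_def power2_eq_square algebra_simps)
  moreover have "(\<Sum>i<L. Z i)\<^sup>2 \<le> (2 * s) * (\<Sum>i<L. (Z i)\<^sup>2 / r i)"
    using sum_power2_le_weighted[of L r Z] r_pos r_sum
      mult_right_mono[OF r_sum, of "\<Sum>i<L. (Z i)\<^sup>2 / r i"]
    by (simp add: sum_nonneg less_imp_le)
  ultimately have "(lse_error \<mu> \<xi>)\<^sup>2
      \<le> s\<^sup>2 + (2 * ((2 * s) * (\<Sum>i<L. (Z i)\<^sup>2 / r i)) + 2 * (enorm n \<xi> * r L)\<^sup>2) / s\<^sup>2"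
    using s by (smt (verit) divide_right_mono zero_le_power2)
  also have "\<dots> = s\<^sup>2 + (4 / s) * (\<Sum>i<L. (Z i)\<^sup>2 / r i) + (2 * (r L)\<^sup>2 / s\<^sup>2) * (enorm n \<xi>)\<^sup>2"
    using s by (simp add: field_simps power2_eq_square)
  finally show ?thesis by (simp add: Z_def)
qed


lemma chain_links_sq_majorants:
  assumes \<sigma>: "\<sigma> > 0" and r_pos: "\<And>i. r i > 0"
  shows "\<exists>G. \<forall>i\<in>{..<L}.
    gauss_mean_le n \<sigma> (G i) (\<sigma>\<^sup>2 * (r i)\<^sup>2 * (4 * ln (4 * (real (card (chain_links N \<mu> i)) + 1)) + 2))
    \<and> (\<forall>\<xi>. (max_abs_einner n (chain_links N \<mu> i) \<xi>)\<^sup>2 \<le> G i \<xi>)"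
proof (rule bchoice, rule ballI)
  fix i assume "i \<in> {..<L}"
  then have i: "i < L" by simp
  show "\<exists>G. gauss_mean_le n \<sigma> G (\<sigma>\<^sup>2 * (r i)\<^sup>2 * (4 * ln (4 * (real (card (chain_links N \<mu> i)) + 1)) + 2))
      \<and> (\<forall>\<xi>. (max_abs_einner n (chain_links N \<mu> i) \<xi>)\<^sup>2 \<le> G \<xi>)"
    by (rule max_abs_einner_sq_majorant[OF chain_links_finite_card_enorm(1)[OF i] r_pos \<sigma>
          chain_links_finite_card_enorm(3)[OF i]])
qed

lemma nn_integral_lse_error_sq_le_chaining:
  assumes \<sigma>: "\<sigma> > 0" and s: "s > 0" "r 0 = s" and r_pos: "\<And>i. r i > 0"
    and r_sum: "(\<Sum>i<L. r i) \<le> 2 * s"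
  shows "(\<integral>\<^sup>+\<xi>. ennreal ((lse_error \<mu> \<xi>)\<^sup>2) \<partial>gauss n \<sigma>)
    \<le> ennreal (s\<^sup>2 + (4 / s) * (\<Sum>i<L. \<sigma>\<^sup>2 * r i * (4 * ln (4 * (real (card (chain_links N \<mu> i)) + 1)) + 2))
        + 16 * (r L)\<^sup>2 * real n * \<sigma>\<^sup>2 / s\<^sup>2)"
proof -
  define B where "B = (\<lambda>i. \<sigma>\<^sup>2 * (r i)\<^sup>2 * (4 * ln (4 * (real (card (chain_links N \<mu> i)) + 1)) + 2))"
  obtain G where G_all: "\<forall>i\<in>{..<L}. gauss_mean_le n \<sigma> (G i) (B i) \<and>
      (\<forall>\<xi>. (max_abs_einner n (chain_links N \<mu> i) \<xi>)\<^sup>2 \<le> G i \<xi>)"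
    using chain_links_sq_majorants[OF \<sigma> r_pos] unfolding B_def ..
  then have G: "\<And>i. i < L \<Longrightarrow> gauss_mean_le n \<sigma> (G i) (B i)"
    and G_ge: "\<And>i \<xi>. i < L \<Longrightarrow> (max_abs_einner n (chain_links N \<mu> i) \<xi>)\<^sup>2 \<le> G i \<xi>"
    by auto
  define H where "H = (\<lambda>\<xi>. s\<^sup>2 + (4 / s) * (\<Sum>i<L. (1 / r i) * G i \<xi>)
    + (2 * (r L)\<^sup>2 / s\<^sup>2) * sq_norm_majorant n \<sigma> \<xi>)"
  have "gauss_mean_le n \<sigma> (\<lambda>\<xi>. \<Sum>i<L. (1 / r i) * G i \<xi>) (\<Sum>i<L. (1 / r i) * B i)"
  proof (rule gauss_mean_le_sum[OF \<sigma>])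
    fix i assume "i \<in> {..<L}"
    then show "gauss_mean_le n \<sigma> (\<lambda>\<xi>. (1 / r i) * G i \<xi>) ((1 / r i) * B i)"
      using r_pos[of i] by (intro gauss_mean_le_cmult G) auto
  qed simp
  then have "gauss_mean_le n \<sigma> H (s\<^sup>2 + (4 / s) * (\<Sum>i<L. (1 / r i) * B i)
    + (2 * (r L)\<^sup>2 / s\<^sup>2) * (8 * real n * \<sigma>\<^sup>2))"
    unfolding H_def using s
    by (intro gauss_mean_le_add gauss_mean_le_const[OF \<sigma>] gauss_mean_le_cmult
        gauss_mean_le_sq_norm_majorant[OF \<sigma>]) auto
  moreover have "(lse_error \<mu> \<xi>)\<^sup>2 \<le> H \<xi>" for \<xi>
  proof -
    have "(\<Sum>i<L. (max_abs_einner n (chain_links N \<mu> i) \<xi>)\<^sup>2 / r i) \<le> (\<Sum>i<L. (1 / r i) * G i \<xi>)"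
      using G_ge r_pos by (intro sum_mono) (simp add: divide_right_mono less_imp_le)
    then have "(4 / s) * (\<Sum>i<L. (max_abs_einner n (chain_links N \<mu> i) \<xi>)\<^sup>2 / r i)
        \<le> (4 / s) * (\<Sum>i<L. (1 / r i) * G i \<xi>)"
      by (rule mult_left_mono) (use s in simp)
    moreover have "(2 * (r L)\<^sup>2 / s\<^sup>2) * (enorm n \<xi>)\<^sup>2 \<le> (2 * (r L)\<^sup>2 / s\<^sup>2) * sq_norm_majorant n \<sigma> \<xi>"
      using enorm_sq_le_sq_norm_majorant[OF \<sigma>] by (rule mult_left_mono) simp
    ultimately show ?thesis
      using lse_error_sq_le_chaining[OF s r_pos r_sum, of \<xi>] unfolding H_def by linarith
  qed
  ultimately have "(\<integral>\<^sup>+\<xi>. ennreal ((lse_error \<mu> \<xi>)\<^sup>2) \<partial>gauss n \<sigma>)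
      \<le> ennreal (s\<^sup>2 + (4 / s) * (\<Sum>i<L. (1 / r i) * B i) + (2 * (r L)\<^sup>2 / s\<^sup>2) * (8 * real n * \<sigma>\<^sup>2))"
    by (rule nn_integral_gauss_le_of_majorant)
  moreover have "(\<Sum>i<L. (1 / r i) * B i)
      = (\<Sum>i<L. \<sigma>\<^sup>2 * r i * (4 * ln (4 * (real (card (chain_links N \<mu> i)) + 1)) + 2))"
    using r_pos by (intro sum.cong) (auto simp: B_def power2_eq_square)
  ultimately show ?thesis by (simp add: mult_ac)
qed

end

lemma sum_div_power_le:
  fixes c s :: real
  assumes c: "c \<ge> 2" and s: "s \<ge> 0"
  shows "(\<Sum>k<j. s / c ^ k) \<le> 2 * s"
proof -
  have "(\<Sum>k<j. (1 / c) ^ k) = (1 - (1 / c) ^ j) / (1 - 1 / c)"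
    using c by (simp add: sum_gp_strict)
  also have "\<dots> \<le> 1 / (1 - 1 / c)"
    using c by (intro divide_right_mono) auto
  also have "\<dots> \<le> 2"
    using c by (simp add: field_simps)
  finally have "s * (\<Sum>k<j. (1 / c) ^ k) \<le> s * 2"
    using s by (rule mult_left_mono)
  then show ?thesis by (simp add: sum_distrib_left power_one_over mult.commute)
qed

lemma sum_div_power_sq_le:
  fixes c s :: real
  assumes c: "c \<ge> 2"
  shows "(\<Sum>k<j. (s / c ^ k)\<^sup>2) \<le> 2 * s\<^sup>2"
proof -
  have "c\<^sup>2 \<ge> 2" using c power_mono[of 2 c 2] by simp
  then have "(\<Sum>k<j. s\<^sup>2 / (c\<^sup>2) ^ k) \<le> 2 * s\<^sup>2"
    by (intro sum_div_power_le) auto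
  then show ?thesis by (simp add: power_divide power_mult[symmetric] mult.commute)
qed

lemma ln_8_le_3: "ln (8::real) \<le> 3"
proof -
  have "(2::real) ^ 3 \<le> exp 1 ^ 3"
    using exp_ge_add_one_self[of 1] by (intro power_mono) auto
  then have "8 \<le> exp (3::real)" by (simp add: exp_of_nat_mult[symmetric])
  then have "ln 8 \<le> ln (exp (3::real))" by (subst ln_le_cancel_iff) auto
  then show ?thesis by simp
qed

lemma ln_card_le_of_ln_net_sizes:
  fixes m :: "nat \<Rightarrow> nat" and r :: "nat \<Rightarrow> real"
  assumes card: "k \<le> (\<Prod>j<J. m j)"
    and ln_m: "\<And>j. j < J \<Longrightarrow> ln (real (m j)) < (r j)\<^sup>2 / \<sigma>\<^sup>2"
    and r: "(\<Sum>j<J. (r j)\<^sup>2) \<le> 2 * s\<^sup>2" and \<sigma>: "\<sigma> > 0"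
  shows "ln (4 * (real k + 1)) \<le> 3 + 2 * s\<^sup>2 / \<sigma>\<^sup>2"
proof -
  define P where "P = (\<Prod>j<J. real (max 1 (m j)))"
  have P: "P \<ge> 1" unfolding P_def by (intro prod_ge_1) auto
  have "real k \<le> (\<Prod>j<J. real (m j))" using card by (metis of_nat_le_iff of_nat_prod)
  also have "\<dots> \<le> P" unfolding P_def by (intro prod_mono) auto
  finally have "ln (4 * (real k + 1)) \<le> ln (8 * P)"
    using P by (subst ln_le_cancel_iff) auto
  also have "\<dots> = ln 8 + (\<Sum>j<J. ln (real (max 1 (m j))))"
    using P by (simp add: ln_mult P_def ln_prod)
  also have "(\<Sum>j<J. ln (real (max 1 (m j)))) \<le> (\<Sum>j<J. (r j)\<^sup>2 / \<sigma>\<^sup>2)"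
  proof (intro sum_mono)
    fix j assume "j \<in> {..<J}"
    then show "ln (real (max 1 (m j))) \<le> (r j)\<^sup>2 / \<sigma>\<^sup>2"
      using ln_m[of j] by (cases "m j \<le> 1") (auto simp: max_def)
  qed
  also have "\<dots> \<le> 2 * s\<^sup>2 / \<sigma>\<^sup>2"
    using r \<sigma> by (simp add: sum_divide_distrib[symmetric] divide_right_mono)
  finally show ?thesis using ln_8_le_3 by linarith
qed

context closed_convex_set
begin

lemma exists_chaining_nets:
  assumes c: "c > 0" and r: "\<And>j. r j > 0" and r_Suc: "\<And>j. r (Suc j) = r j / c"
    and lp: "\<And>j. j < L \<Longrightarrow> local_packing n c K (r j) = enat (m j)" and \<mu>: "\<mu> \<in> K"
  obtains N where "chaining_nets n K L r N m \<mu>"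
proof -
  have "\<forall>p\<in>{..<L} \<times> K. \<exists>P. finite P \<and> P \<subseteq> eball n (snd p) (r (fst p)) \<inter> K
      \<and> card P \<le> m (fst p)
      \<and> (\<forall>v\<in>eball n (snd p) (r (fst p)) \<inter> K. \<exists>q\<in>P. edist n v q \<le> r (fst p) / c)"
  proof
    fix p assume "p \<in> {..<L} \<times> K"
    then obtain P where "finite P" "P \<subseteq> eball n (snd p) (r (fst p)) \<inter> K" "card P \<le> m (fst p)"
      "\<And>v. v \<in> eball n (snd p) (r (fst p)) \<inter> K \<Longrightarrow> \<exists>q\<in>P. edist n v q \<le> r (fst p) / c"
      using local_packing_net[OF c r lp] by (metis SigmaE fst_conv lessThan_iff snd_conv)
    then show "\<exists>P. finite P \<and> P \<subseteq> eball n (snd p) (r (fst p)) \<inter> K \<and> card P \<le> m (fst p)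
      \<and> (\<forall>v\<in>eball n (snd p) (r (fst p)) \<inter> K. \<exists>q\<in>P. edist n v q \<le> r (fst p) / c)"
      by blast
  qed
  then have "\<exists>f. \<forall>p\<in>{..<L} \<times> K. finite (f p) \<and> f p \<subseteq> eball n (snd p) (r (fst p)) \<inter> K
      \<and> card (f p) \<le> m (fst p)
      \<and> (\<forall>v\<in>eball n (snd p) (r (fst p)) \<inter> K. \<exists>q\<in>f p. edist n v q \<le> r (fst p) / c)"
    by (rule bchoice)
  then obtain f where f: "\<forall>p\<in>{..<L} \<times> K. finite (f p) \<and> f p \<subseteq> eball n (snd p) (r (fst p)) \<inter> K
      \<and> card (f p) \<le> m (fst p)
      \<and> (\<forall>v\<in>eball n (snd p) (r (fst p)) \<inter> K. \<exists>q\<in>f p. edist n v q \<le> r (fst p) / c)" ..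
  have "chaining_nets n K L r (\<lambda>j \<theta>. f (j, \<theta>)) m \<mu>"
    by unfold_locales (use f r_Suc \<mu> in auto)
  then show thesis by (rule that)
qed

lemma lse_error_sq_le_of_local_packing_le_one:
  assumes c: "c > 1" and \<epsilon>: "\<epsilon> > 0" and lp: "local_packing n c K \<epsilon> = enat m" and m: "m \<le> 1"
    and \<mu>: "\<mu> \<in> K"
  shows "(lse_error \<mu> \<xi>)\<^sup>2 \<le> enorm n \<xi> * \<epsilon>"
proof -
  have "lse_error \<mu> \<xi> \<le> \<epsilon> / c"
    unfolding lse_error_def using subset_Rn
    by (intro edist_le_of_local_packing_le_one[OF c \<epsilon> lp m convex _ \<mu> lse_in])
  also have "\<dots> \<le> \<epsilon>" using c \<epsilon> by (simp add: divide_le_eq)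
  finally show ?thesis
    using lse_error_sq_le_enorm_mult[OF \<mu>, of \<xi>] mult_left_mono[of _ \<epsilon> "enorm n \<xi>"] by force
qed

end

lemma ennreal_le_of_forall_gt:
  fixes k e :: real
  assumes k: "k > 0" and le: "\<And>x. e < x \<Longrightarrow> X \<le> ennreal (k * x)"
  shows "X \<le> ennreal (k * e)"
proof (rule dense_ge)
  fix y assume y: "ennreal (k * e) < y"
  show "X \<le> y"
  proof (cases y rule: ennreal_cases)
    case (real r)
    then have "k * e < r"
      using y ennreal_less_iff[of "k * e" r] by (cases "0 \<le> k * e") auto
    then have "e < r / k" using k by (simp add: pos_less_divide_eq mult.commute)
    then show ?thesis using le[of "r / k"] k real by simp
  qed simp
qed

locale gaussian_lse = closed_convex_set +
  fixes \<sigma> :: real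
  assumes dim_pos: "n \<ge> 1" and sigma_pos: "\<sigma> > 0"
begin

definition risk :: "(nat \<Rightarrow> real) \<Rightarrow> ennreal" where
  "risk \<mu> = (\<integral>\<^sup>+\<xi>. ennreal ((lse_error \<mu> \<xi>)\<^sup>2) \<partial>gauss n \<sigma>)"

lemma worst_risk_eq_Sup_risk: "worst_risk n \<sigma> K = (SUP \<mu>\<in>K. risk \<mu>)"
  by (simp add: worst_risk_def risk_def lse_error_def)

lemma risk_le_dim:
  assumes \<mu>: "\<mu> \<in> K"
  shows "risk \<mu> \<le> ennreal (8 * real n * \<sigma>\<^sup>2)"
  unfolding risk_def
proof (rule nn_integral_gauss_le_of_majorant[OF gauss_mean_le_sq_norm_majorant[OF sigma_pos]])
  fix \<xi>
  have "(lse_error \<mu> \<xi>)\<^sup>2 \<le> (enorm n \<xi>)\<^sup>2"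
    using lse_error_le_enorm[OF \<mu>] by (simp add: power_mono)
  also have "\<dots> \<le> sq_norm_majorant n \<sigma> \<xi>"
    by (rule enorm_sq_le_sq_norm_majorant[OF sigma_pos])
  finally show "(lse_error \<mu> \<xi>)\<^sup>2 \<le> sq_norm_majorant n \<sigma> \<xi>" .
qed

lemma risk_le_of_local_packing_le_one:
  assumes c: "c > 1" and \<epsilon>: "\<epsilon> > 0" and lp: "local_packing n c K \<epsilon> = enat m" and m: "m \<le> 1"
    and \<mu>: "\<mu> \<in> K"
  shows "risk \<mu> \<le> ennreal (5 * (\<sigma> * sqrt (real n)) * \<epsilon>)"
proof -
  define b where "b = \<sigma> * sqrt (real n)"
  have b: "b > 0" using sigma_pos dim_pos by (simp add: b_def)
  have nb: "real n * \<sigma>\<^sup>2 = b * b" using dim_pos by (simp add: b_def power2_eq_square)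
  have "gauss_mean_le n \<sigma> (\<lambda>\<xi>. (\<epsilon> / (2 * b)) * sq_norm_majorant n \<sigma> \<xi> + \<epsilon> * b / 2)
      ((\<epsilon> / (2 * b)) * (8 * real n * \<sigma>\<^sup>2) + \<epsilon> * b / 2)"
    using \<epsilon> b by (intro gauss_mean_le_add gauss_mean_le_cmult gauss_mean_le_sq_norm_majorant[OF sigma_pos]
        gauss_mean_le_const[OF sigma_pos]) auto
  moreover have "(lse_error \<mu> \<xi>)\<^sup>2 \<le> (\<epsilon> / (2 * b)) * sq_norm_majorant n \<sigma> \<xi> + \<epsilon> * b / 2" for \<xi>
  proof -
    have "(lse_error \<mu> \<xi>)\<^sup>2 \<le> enorm n \<xi> * \<epsilon>"
      by (rule lse_error_sq_le_of_local_packing_le_one[OF c \<epsilon> lp m \<mu>])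
    also have "\<dots> \<le> ((enorm n \<xi>)\<^sup>2 / b + b) / 2 * \<epsilon>"
    proof -
      have "2 * b * enorm n \<xi> \<le> (enorm n \<xi>)\<^sup>2 + b * b"
        using zero_le_power2[of "enorm n \<xi> - b"] by (simp add: power2_eq_square algebra_simps)
      then show ?thesis using b \<epsilon> by (intro mult_right_mono) (auto simp: field_simps power2_eq_square)
    qed
    also have "\<dots> \<le> (sq_norm_majorant n \<sigma> \<xi> / b + b) / 2 * \<epsilon>"
      using enorm_sq_le_sq_norm_majorant[OF sigma_pos, of n \<xi>] b \<epsilon>
      by (intro mult_right_mono divide_right_mono add_right_mono) auto
    finally show ?thesis using b by (simp add: field_simps)
  qed
  ultimately have "risk \<mu> \<le> ennreal ((\<epsilon> / (2 * b)) * (8 * real n * \<sigma>\<^sup>2) + \<epsilon> * b / 2)"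
    unfolding risk_def by (rule nn_integral_gauss_le_of_majorant)
  also have "\<dots> \<le> ennreal (5 * (\<sigma> * sqrt (real n)) * \<epsilon>)"
  proof (rule ennreal_leI)
    have eq: "(\<epsilon> / (2 * b)) * (8 * real n * \<sigma>\<^sup>2) + \<epsilon> * b / 2 = (9 / 2) * (\<epsilon> * b)"
      using b by (simp add: nb field_simps)
    have "(\<epsilon> / (2 * b)) * (8 * real n * \<sigma>\<^sup>2) + \<epsilon> * b / 2 \<le> 5 * b * \<epsilon>"
      unfolding eq using mult_pos_pos[OF \<epsilon> b] by (simp add: mult.commute)
    then show "(\<epsilon> / (2 * b)) * (8 * real n * \<sigma>\<^sup>2) + \<epsilon> * b / 2 \<le> 5 * (\<sigma> * sqrt (real n)) * \<epsilon>"
      by (simp only: b_def)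
  qed
  finally show ?thesis .
qed

end

context gaussian_lse
begin

lemma risk_le_chaining:
  assumes c: "c \<ge> 2" and s: "s > 0" and \<mu>: "\<mu> \<in> K"
    and lp: "\<And>j. j < L \<Longrightarrow> local_packing n c K (s / c ^ j) = enat (m j)"
    and ln_m: "\<And>j. j < L \<Longrightarrow> ln (real (m j)) < (s / c ^ j)\<^sup>2 / \<sigma>\<^sup>2"
  shows "risk \<mu> \<le> ennreal (65 * s\<^sup>2 + 112 * \<sigma>\<^sup>2 + 16 * (s / c ^ L)\<^sup>2 * real n * \<sigma>\<^sup>2 / s\<^sup>2)"
proof -
  define r where "r = (\<lambda>j::nat. s / c ^ j)"
  have r_pos: "\<And>j. r j > 0" using c s by (simp add: r_def)
  have r_sum: "(\<Sum>j<L. r j) \<le> 2 * s"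
    unfolding r_def using c s by (intro sum_div_power_le) auto
  have c0: "c > 0" and r_Suc: "\<And>j. r (Suc j) = r j / c"
    and lp_r: "\<And>j. j < L \<Longrightarrow> local_packing n c K (r j) = enat (m j)"
    using c lp by (simp_all add: r_def)
  obtain N where "chaining_nets n K L r N m \<mu>"
    by (rule exists_chaining_nets[where r = r and m = m and L = L, OF c0 r_pos r_Suc lp_r \<mu>])
  then interpret chaining_nets n K L r N m \<mu> .
  define T where "T = (\<lambda>j. \<sigma>\<^sup>2 * r j * (4 * ln (4 * (real (card (chain_links N \<mu> j)) + 1)) + 2))"
  have T: "T j \<le> r j * (14 * \<sigma>\<^sup>2 + 8 * s\<^sup>2)" if j: "j < L" for j
  proof -
    have "ln (real (m k)) < (r k)\<^sup>2 / \<sigma>\<^sup>2" if "k < Suc j" for k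
      using ln_m[of k] that j by (simp add: r_def)
    moreover have "(\<Sum>k<Suc j. (r k)\<^sup>2) \<le> 2 * s\<^sup>2"
      unfolding r_def by (rule sum_div_power_sq_le[OF c])
    ultimately have "ln (4 * (real (card (chain_links N \<mu> j)) + 1)) \<le> 3 + 2 * s\<^sup>2 / \<sigma>\<^sup>2"
      by (rule ln_card_le_of_ln_net_sizes[OF chain_links_finite_card_enorm(2)[OF j] _ _ sigma_pos])
    then have "T j \<le> \<sigma>\<^sup>2 * r j * (14 + 8 * s\<^sup>2 / \<sigma>\<^sup>2)"
      unfolding T_def using r_pos[of j] by (intro mult_left_mono) auto
    also have "\<dots> = r j * (14 * \<sigma>\<^sup>2 + 8 * s\<^sup>2)"
      using sigma_pos by (simp add: field_simps)
    finally show ?thesis .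
  qed
  have "(4 / s) * (\<Sum>j<L. T j) \<le> (4 / s) * ((\<Sum>j<L. r j) * (14 * \<sigma>\<^sup>2 + 8 * s\<^sup>2))"
    using T s by (intro mult_left_mono) (auto simp: sum_distrib_right intro: sum_mono)
  also have "\<dots> \<le> (4 / s) * ((2 * s) * (14 * \<sigma>\<^sup>2 + 8 * s\<^sup>2))"
    using r_sum s by (intro mult_left_mono mult_right_mono) auto
  also have "\<dots> = 112 * \<sigma>\<^sup>2 + 64 * s\<^sup>2"
    using s by (simp add: field_simps power2_eq_square)
  finally have "s\<^sup>2 + (4 / s) * (\<Sum>j<L. T j) + 16 * (r L)\<^sup>2 * real n * \<sigma>\<^sup>2 / s\<^sup>2
      \<le> 65 * s\<^sup>2 + 112 * \<sigma>\<^sup>2 + 16 * (s / c ^ L)\<^sup>2 * real n * \<sigma>\<^sup>2 / s\<^sup>2"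
    by (simp add: r_def)
  moreover have "risk \<mu> \<le> ennreal (s\<^sup>2 + (4 / s) * (\<Sum>j<L. T j) + 16 * (r L)\<^sup>2 * real n * \<sigma>\<^sup>2 / s\<^sup>2)"
    unfolding risk_def T_def using sigma_pos s r_pos r_sum
    by (intro nn_integral_lse_error_sq_le_chaining) (auto simp: r_def)
  ultimately show ?thesis
    using ennreal_leI order_trans by blast
qed

text \<open>The main case: chain from the scale \<open>s = sqrt (\<sigma> sqrt n x)\<close> down to the first scale
  \<open>s / c\<^sup>L \<le> x\<close>; every coarser scale lies above \<open>\<epsilon>\<^sup>*\<close>, where the local entropy is small.\<close>
lemma risk_le_between_scales:
  assumes c: "c \<ge> 2" and \<mu>: "\<mu> \<in> K" and x: "eps_star n c K \<sigma> < x"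
    and \<sigma>x: "\<sigma> \<le> 2 * x" and xb: "x < \<sigma> * sqrt (real n)"
  shows "risk \<mu> \<le> ennreal (305 * (\<sigma> * sqrt (real n)) * x)"
proof -
  define b where "b = \<sigma> * sqrt (real n)"
  have b: "b > 0" "\<sigma> \<le> b" using sigma_pos dim_pos by (auto simp: b_def)
  have x0: "x > 0" using sigma_pos \<sigma>x by linarith
  define s where "s = sqrt (b * x)"
  have s: "s > 0" "s\<^sup>2 = b * x" using b x0 by (auto simp: s_def)
  have "x\<^sup>2 < s\<^sup>2" using xb x0 s by (simp add: b_def power2_eq_square)
  then have xs: "x < s" using less_imp_le[OF s(1)] by (rule power2_less_imp_less)
  obtain L0 where "s / x < c ^ L0" using real_arch_pow[of c "s / x"] c by auto
  then have "s < c ^ L0 * x" using x0 by (simp add: pos_divide_less_eq)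
  moreover have "c ^ L0 > 0" using c by simp
  ultimately have "s / c ^ L0 \<le> x" by (simp add: divide_le_eq mult.commute)
  then have "\<exists>L. s / c ^ L \<le> x" by blast
  define L where "L = (LEAST L. s / c ^ L \<le> x)"
  have sL: "s / c ^ L \<le> x" unfolding L_def by (rule LeastI_ex) fact
  define m where "m = (\<lambda>j. the_enat (local_packing n c K (s / c ^ j)))"
  have "local_packing n c K (s / c ^ j) = enat (m j) \<and> ln (real (m j)) < (s / c ^ j)\<^sup>2 / \<sigma>\<^sup>2"
    if "j < L" for j
  proof -
    have "x < s / c ^ j" using not_less_Least[OF that[unfolded L_def]] by simp
    then have "eps_star n c K \<sigma> < s / c ^ j" using x by linarith
    moreover have "c > 0" using c by simp
    ultimately obtain k where "local_packing n c K (s / c ^ j) = enat k"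
      and "ln (real k) < (s / c ^ j)\<^sup>2 / \<sigma>\<^sup>2"
      using local_packing_gt_eps_star[OF dim_pos _ sigma_pos] by blast
    then show ?thesis by (simp add: m_def)
  qed
  then have "risk \<mu> \<le> ennreal (65 * s\<^sup>2 + 112 * \<sigma>\<^sup>2 + 16 * (s / c ^ L)\<^sup>2 * real n * \<sigma>\<^sup>2 / s\<^sup>2)"
    using c s \<mu> by (intro risk_le_chaining) auto
  also have "\<dots> \<le> ennreal (305 * b * x)"
  proof (rule ennreal_leI)
    have nb: "real n * \<sigma>\<^sup>2 = b * b" using dim_pos by (simp add: b_def power2_eq_square)
    have "(s / c ^ L)\<^sup>2 \<le> x\<^sup>2" using sL s c by (intro power_mono) auto
    have "16 * (s / c ^ L)\<^sup>2 * real n * \<sigma>\<^sup>2 / s\<^sup>2 = 16 * (s / c ^ L)\<^sup>2 * (b * b) / (b * x)"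
      by (simp only: s(2) mult.assoc nb)
    also have "\<dots> \<le> 16 * x\<^sup>2 * (b * b) / (b * x)"
      using \<open>(s / c ^ L)\<^sup>2 \<le> x\<^sup>2\<close> b x0 by (intro divide_right_mono mult_right_mono mult_left_mono) auto
    also have "\<dots> = 16 * (b * x)" using b x0 by (simp add: power2_eq_square field_simps)
    finally have "16 * (s / c ^ L)\<^sup>2 * real n * \<sigma>\<^sup>2 / s\<^sup>2 \<le> 16 * (b * x)" .
    moreover have "\<sigma>\<^sup>2 \<le> 2 * (b * x)"
      using mult_mono[OF b(2) \<sigma>x] sigma_pos b by (simp add: power2_eq_square mult_ac)
    ultimately show "65 * s\<^sup>2 + 112 * \<sigma>\<^sup>2 + 16 * (s / c ^ L)\<^sup>2 * real n * \<sigma>\<^sup>2 / s\<^sup>2 \<le> 305 * b * x"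
      using s by linarith
  qed
  finally show ?thesis by (simp add: b_def)
qed

lemma risk_le_above_eps_star:
  assumes c: "c \<ge> 2" and \<mu>: "\<mu> \<in> K" and x: "eps_star n c K \<sigma> < x"
  shows "risk \<mu> \<le> ennreal (305 * (\<sigma> * sqrt (real n)) * x)"
proof -
  define b where "b = \<sigma> * sqrt (real n)"
  have b: "b > 0" using sigma_pos dim_pos by (simp add: b_def)
  have x0: "x > 0" using eps_star_nonneg[OF dim_pos _ sigma_pos, of c K] c x by linarith
  consider "x \<le> \<sigma> / 2" | "\<sigma> / 2 < x" "b \<le> x" | "\<sigma> / 2 < x" "x < b" by linarith
  then show ?thesis
  proof cases
    case 1
    have "c > 0" using c by simp
    then obtain m where lp: "local_packing n c K x = enat m" and ln_m: "ln (real m) < x\<^sup>2 / \<sigma>\<^sup>2"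
      using local_packing_gt_eps_star[OF dim_pos _ sigma_pos x] by blast
    have "x\<^sup>2 \<le> (\<sigma> / 2)\<^sup>2" using 1 x0 by (intro power_mono) auto
    then have "x\<^sup>2 / \<sigma>\<^sup>2 \<le> 1 / 4" using sigma_pos by (simp add: power_divide divide_le_eq)
    moreover have "ln (exp (1 / 2)) \<le> ln (2::real)"
      using exp_half_le2 by (subst ln_le_cancel_iff) auto
    then have "1 / 2 \<le> ln (2::real)" by simp
    ultimately have "ln (real m) < ln 2" using ln_m by linarith
    then have m: "m \<le> 1" by (cases "m = 0") auto
    have "risk \<mu> \<le> ennreal (5 * b * x)"
      unfolding b_def using c by (intro risk_le_of_local_packing_le_one[OF _ x0 lp m \<mu>]) simp
    also have "\<dots> \<le> ennreal (305 * b * x)" using b x0 by (intro ennreal_leI) simp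
    finally show ?thesis by (simp add: b_def)
  next
    case 2
    have "risk \<mu> \<le> ennreal (8 * real n * \<sigma>\<^sup>2)" by (rule risk_le_dim[OF \<mu>])
    also have "8 * real n * \<sigma>\<^sup>2 = 8 * b * b" using dim_pos by (simp add: b_def power2_eq_square)
    also have "ennreal (8 * b * b) \<le> ennreal (305 * b * x)"
      using 2 b by (intro ennreal_leI) (simp add: mult_left_mono)
    finally show ?thesis by (simp add: b_def)
  next
    case 3
    then show ?thesis using c \<mu> x by (intro risk_le_between_scales) (auto simp: b_def)
  qed
qed

lemma risk_le_eps_star:
  assumes "c \<ge> 2" and "\<mu> \<in> K"
  shows "risk \<mu> \<le> ennreal (305 * (\<sigma> * sqrt (real n)) * eps_star n c K \<sigma>)"
  by (rule ennreal_le_of_forall_gt) (use sigma_pos dim_pos risk_le_above_eps_star[OF assms] in auto)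

lemma worst_risk_le_eps_star:
  assumes "c \<ge> 2"
  shows "worst_risk n \<sigma> K \<le> ennreal (305 * (\<sigma> * sqrt (real n)) * eps_star n c K \<sigma>)"
  unfolding worst_risk_eq_Sup_risk using risk_le_eps_star[OF assms] by (rule SUP_least)

end

lemma one_le_log_factor:
  assumes c: "c > 1" and n: "n \<ge> 1"
  shows "1 \<le> (1 + log c (sqrt (2 * pi * real n))) powr (3 / 2)"
proof -
  have "1 \<le> 2 * pi * real n" using n pi_gt3 by (simp add: order_trans[OF _ mult_right_mono[of 1 "2 * pi"]])
  then have "0 \<le> log c (sqrt (2 * pi * real n))" using c by simp
  then show ?thesis by (intro ge_one_powr_ge_zero) auto
qed

lemma rate_le_square:
  assumes \<sigma>: "0 \<le> \<sigma>" and e: "0 \<le> e" and P: "1 \<le> P"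
  shows "305 * (\<sigma> * sqrt (real n)) * e \<le> (1 * sqrt \<sigma> * (4 * 5 * P) * sqrt e * real n powr (1 / 4))\<^sup>2"
proof -
  have "(real n powr (1 / 4))\<^sup>2 = real n powr (of_nat 2 * (1 / 4))"
    by (cases "n = 0") (simp_all add: powr_power)
  also have "\<dots> = sqrt (real n)"
    by (simp add: powr_half_sqrt)
  finally have "(1 * sqrt \<sigma> * (4 * 5 * P) * sqrt e * real n powr (1 / 4))\<^sup>2
      = (4 * 5 * P)\<^sup>2 * (\<sigma> * sqrt (real n) * e)"
    using \<sigma> e by (simp add: power_mult_distrib mult_ac)
  moreover have "(20::real) * 20 \<le> (4 * 5 * P) * (4 * 5 * P)"
    using P by (intro mult_mono) auto
  then have "305 * (\<sigma> * sqrt (real n) * e) \<le> (4 * 5 * P)\<^sup>2 * (\<sigma> * sqrt (real n) * e)"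
    using \<sigma> e by (intro mult_right_mono) (auto simp: power2_eq_square)
  ultimately show ?thesis by (simp add: mult.assoc)
qed

lemma worst_risk_le_rate:
  assumes c: "2 \<le> cstar" and n: "n \<ge> 1" and K: "K \<noteq> {}" "K \<subseteq> Rn n" "closed_n n K" "convex_n K"
    and \<sigma>: "\<sigma> > 0"
  shows "worst_risk n \<sigma> K \<le> ennreal ((1 * sqrt \<sigma>
      * (4 * 5 * (1 + log cstar (sqrt (2 * pi * real n))) powr (3/2))
      * sqrt (eps_star n cstar K \<sigma>) * real n powr (1/4))\<^sup>2)"
proof -
  interpret gaussian_lse n K \<sigma> using n K \<sigma> by unfold_locales
  have "305 * (\<sigma> * sqrt (real n)) * eps_star n cstar K \<sigma>
      \<le> (1 * sqrt \<sigma> * (4 * 5 * (1 + log cstar (sqrt (2 * pi * real n))) powr (3/2))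
        * sqrt (eps_star n cstar K \<sigma>) * real n powr (1/4))\<^sup>2"
    using c \<sigma> n eps_star_nonneg[OF n _ \<sigma>, of cstar K]
    by (intro rate_le_square one_le_log_factor) auto
  with worst_risk_le_eps_star[OF c] show ?thesis
    using ennreal_leI order_trans by blast
qed

theorem mainTheorem5:
  shows "\<exists>c0>1. \<forall>cstar\<ge>c0. \<exists>C>1. \<exists>A>0. \<forall>(n::nat) (K::(nat \<Rightarrow> real) set) (\<sigma>::real).
    n \<ge> 1 \<and> K \<noteq> {} \<and> K \<subseteq> Rn n \<and> closed_n n K \<and> convex_n K \<and> \<sigma> > 0 \<longrightarrow>
    worst_risk n \<sigma> K \<le> ennreal ((A * sqrt \<sigma>
        * (4 * C * (1 + log cstar (sqrt (2 * pi * real n))) powr (3/2))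
        * sqrt (eps_star n cstar K \<sigma>) * real n powr (1/4))\<^sup>2)"
  by (rule exI[of _ 2], rule conjI, simp, intro allI impI, rule exI[of _ 5], rule conjI, simp,
      rule exI[of _ 1], rule conjI, simp, use worst_risk_le_rate in blast)

end
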